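(* Let $X\in\{F,A\}$. For every state $\rho^{ab}$ on $\mathcal H_a\otimes\mathcal H_b$, $C^a_{X,cc}(\rho^{ab})\ge D^a_X(\rho^{ab})$. Equality holds if $\rho^a=\mathrm{Tr}_b\rho^{ab}=I^a/n_a$ (with $n_a=\dim\mathcal H_a$), or if $\rho^{ab}$ is a pure state.
   Context: $F(\rho,\sigma)=\mathrm{Tr}\sqrt{\sqrt\sigma\rho\sqrt\sigma}$, $A(\rho,\sigma)=\mathrm{Tr}(\sqrt\rho\sqrt\sigma)$, $d_X=1-X^2$. For an orthonormal basis $\mathcal B=\{|\alpha_i\rangle\}$ of $\mathcal H_a$, let $C^a_X(\rho^{ab};\mathcal B)=\min d_X(\rho^{ab},\sigma)$ over states $\sigma=\sum_ip_i|\alpha_i\rangle\langle\alpha_i|\otimes\sigma_i$. The correlated coherence is $C^a_{X,cc}(\rho^{ab})=\min_{\mathcal B}C^a_X(\rho^{ab};\mathcal B)$, the minimum over orthonormal bases $\mathcal B$ of $\mathcal H_a$ consisting of eigenvectors of $\rho^a$ (equivalently, bases in which $\rho^a$ has zero coherence). The discord-type quantity is $D^a_X(\rho^{ab})=\min d_X(\rho^{ab},\sigma)$ over all classical-quantum states $\sigma=\sum_ip_i|\alpha_i\rangle\langle\alpha_i|\otimes\sigma_i$ with $\{|\alpha_i\rangle\}$ any orthonormal basis of $\mathcal H_a$ (i.e. the minimum of $C^a_X(\rho^{ab};\mathcal B)$ over all orthonormal bases $\mathcal B$). *)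

theory Defs
  imports "HOL-Analysis.Analysis"
begin

text \<open>The Hilbert space H_a has orthonormal standard basis indexed by the finite type 'a,
  so n_a = CARD('a); H_a \<otimes> H_b is indexed by 'a \<times> 'b.\<close>

type_synonym 'n cmat = "complex ^ 'n ^ 'n"

definition cinner :: "complex ^ 'n::finite \<Rightarrow> complex ^ 'n \<Rightarrow> complex" where
  "cinner u v = (\<Sum>i\<in>UNIV. cnj (u $ i) * v $ i)"

definition adjoint :: "'n::finite cmat \<Rightarrow> 'n cmat" where
  "adjoint A = (\<chi> i j. cnj (A $ j $ i))"

definition ctrace :: "'n::finite cmat \<Rightarrow> complex" where
  "ctrace A = (\<Sum>i\<in>UNIV. A $ i $ i)"

definition psd :: "'n::finite cmat \<Rightarrow> bool" where
  "psd A \<longleftrightarrow> adjoint A = A \<and> (\<forall>v. cinner v (A *v v) \<in> \<real> \<and> 0 \<le> Re (cinner v (A *v v)))"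

definition density :: "'n::finite cmat \<Rightarrow> bool" where
  "density A \<longleftrightarrow> psd A \<and> ctrace A = 1"

definition msqrt :: "'n::finite cmat \<Rightarrow> 'n cmat" where
  "msqrt A = (THE B. psd B \<and> B ** B = A)"

definition outer :: "complex ^ 'n::finite \<Rightarrow> complex ^ 'n \<Rightarrow> 'n cmat" where
  "outer u v = (\<chi> i j. u $ i * cnj (v $ j))"

definition kron :: "'a::finite cmat \<Rightarrow> 'b::finite cmat \<Rightarrow> ('a \<times> 'b) cmat" where
  "kron A B = (\<chi> p q. A $ fst p $ fst q * B $ snd p $ snd q)"

definition ptrace_b :: "('a::finite \<times> 'b::finite) cmat \<Rightarrow> 'a cmat" where
  "ptrace_b R = (\<chi> i i'. \<Sum>j\<in>UNIV. R $ (i, j) $ (i', j))"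

definition fidelity :: "'n::finite cmat \<Rightarrow> 'n cmat \<Rightarrow> real" where
  "fidelity \<rho> \<sigma> = Re (ctrace (msqrt (msqrt \<sigma> ** \<rho> ** msqrt \<sigma>)))"

definition affinity :: "'n::finite cmat \<Rightarrow> 'n cmat \<Rightarrow> real" where
  "affinity \<rho> \<sigma> = Re (ctrace (msqrt \<rho> ** msqrt \<sigma>))"

definition dX :: "('n cmat \<Rightarrow> 'n cmat \<Rightarrow> real) \<Rightarrow> 'n cmat \<Rightarrow> 'n cmat \<Rightarrow> real" where
  "dX X \<rho> \<sigma> = 1 - (X \<rho> \<sigma>)\<^sup>2"

text \<open>Orthonormal basis of H_a, indexed by 'a (hence exactly n_a vectors).\<close>
definition onb :: "('a::finite \<Rightarrow> complex ^ 'a) \<Rightarrow> bool" where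
  "onb \<alpha> \<longleftrightarrow> (\<forall>i j. cinner (\<alpha> i) (\<alpha> j) = (if i = j then 1 else 0))"

definition cq_states :: "('a::finite \<Rightarrow> complex ^ 'a) \<Rightarrow> ('a \<times> 'b::finite) cmat set" where
  "cq_states \<alpha> = {\<sigma>. \<exists>p \<tau>. (\<forall>i. 0 \<le> p i) \<and> (\<Sum>i\<in>UNIV. p i) = 1 \<and> (\<forall>i. density (\<tau> i)) \<and>
      \<sigma> = (\<Sum>i\<in>UNIV. p i *\<^sub>R kron (outer (\<alpha> i) (\<alpha> i)) (\<tau> i))}"

definition C_basis :: "(('a \<times> 'b) cmat \<Rightarrow> ('a \<times> 'b) cmat \<Rightarrow> real) \<Rightarrow> ('a::finite \<Rightarrow> complex ^ 'a)
    \<Rightarrow> ('a \<times> 'b::finite) cmat \<Rightarrow> real" where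
  "C_basis X \<alpha> \<rho> = (INF \<sigma>\<in>cq_states \<alpha>. dX X \<rho> \<sigma>)"

definition eigen_onb :: "'a::finite cmat \<Rightarrow> ('a \<Rightarrow> complex ^ 'a) \<Rightarrow> bool" where
  "eigen_onb A \<alpha> \<longleftrightarrow> onb \<alpha> \<and> (\<forall>i. \<exists>c::complex. A *v \<alpha> i = (\<chi> k. c * \<alpha> i $ k))"

definition C_cc :: "(('a \<times> 'b) cmat \<Rightarrow> ('a \<times> 'b) cmat \<Rightarrow> real) \<Rightarrow> ('a::finite \<times> 'b::finite) cmat \<Rightarrow> real" where
  "C_cc X \<rho> = (INF \<alpha>\<in>{\<alpha>. eigen_onb (ptrace_b \<rho>) \<alpha>}. C_basis X \<alpha> \<rho>)"

definition D_disc :: "(('a \<times> 'b) cmat \<Rightarrow> ('a \<times> 'b) cmat \<Rightarrow> real) \<Rightarrow> ('a::finite \<times> 'b::finite) cmat \<Rightarrow> real" where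
  "D_disc X \<rho> = (INF \<sigma>\<in>(\<Union>\<alpha>\<in>{\<alpha>. onb \<alpha>}. cq_states \<alpha>). dX X \<rho> \<sigma>)"

definition pure_state :: "'n::finite cmat \<Rightarrow> bool" where
  "pure_state \<rho> \<longleftrightarrow> (\<exists>\<psi>. cinner \<psi> \<psi> = 1 \<and> \<rho> = outer \<psi> \<psi>)"

end

theory Submission
  imports Defs
begin

text \<open>
  The states minimised over in \<open>C\<^sub>c\<^sub>c\<close> (classical-quantum states in an eigenbasis of \<open>\<rho>\<^sup>a\<close>) form a
  subset of those minimised over in \<open>D\<close>, which gives the inequality. When \<open>\<rho>\<^sup>a\<close> is maximally
  mixed every orthonormal basis is an eigenbasis, so the two sets coincide.

  When \<open>\<rho> = |\<psi>\<rangle>\<langle>\<psi>|\<close> is pure, let \<open>\<lambda>\<^sub>k\<close> be the eigenvalues of \<open>\<rho>\<^sup>a\<close> in an eigenbasis \<open>\<alpha>\<close> and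
  \<open>q\<^sub>i = \<langle>\<beta>\<^sub>i|\<rho>\<^sup>a|\<beta>\<^sub>i\<rangle>\<close> its diagonal in another basis \<open>\<beta>\<close>. For a classical-quantum state
  \<open>\<sigma> = \<Sum>\<^sub>i p\<^sub>i |\<beta>\<^sub>i\<rangle>\<langle>\<beta>\<^sub>i| \<otimes> \<sigma>\<^sub>i\<close> one has \<open>F(\<rho>,\<sigma>)\<^sup>2 = \<langle>\<psi>|\<sigma>|\<psi>\<rangle> \<le> max\<^sub>k \<lambda>\<^sub>k\<close>, and
  \<open>A(\<rho>,\<sigma>) = \<langle>\<psi>|\<surd>\<sigma>|\<psi>\<rangle> \<le> \<Sum>\<^sub>i \<surd>p\<^sub>i q\<^sub>i \<le> \<surd>(\<Sum>\<^sub>i q\<^sub>i\<^sup>2) \<le> \<surd>(\<Sum>\<^sub>k \<lambda>\<^sub>k\<^sup>2)\<close> by Cauchy-Schwarz and the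
  double stochasticity of \<open>|\<langle>\<alpha>\<^sub>k|\<beta>\<^sub>i\<rangle>|\<^sup>2\<close>. Both bounds are attained by classical-quantum states
  in the eigenbasis \<open>\<alpha>\<close>.
\<close>

lemma scaleR_complex [simp]: "r *\<^sub>R (z::complex) = of_real r * z"
  by (simp add: scaleR_conv_of_real)

lemma scaleR_complex_vec_nth [simp]: "(r *\<^sub>R (x::complex^'n))$i = of_real r * x$i"
  unfolding vector_scaleR_component by (simp add: scaleR_conv_of_real)

lemma scaleR_eq_scalar_mult: "r *\<^sub>R (v::complex^'n) = of_real r *s v"
  by (simp add: vec_eq_iff vector_scalar_mult_def)

lemma cinner_add_right: "cinner u (v + w) = cinner u v + cinner u w"
  by (simp add: cinner_def sum.distrib algebra_simps)

lemma cinner_add_left: "cinner (u + v) w = cinner u w + cinner v w"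
  by (simp add: cinner_def sum.distrib algebra_simps)

lemma cinner_diff_right: "cinner u (v - w) = cinner u v - cinner u w"
  by (simp add: cinner_def sum_subtractf algebra_simps)

lemma cinner_neg_right: "cinner u (- v) = - cinner u v"
  by (simp add: cinner_def sum_negf)

lemma cinner_scale_right: "cinner u (c *s v) = c * cinner u v"
  by (simp add: cinner_def sum_distrib_left algebra_simps)

lemma cinner_scale_left: "cinner (c *s u) v = cnj c * cinner u v"
  by (simp add: cinner_def sum_distrib_left algebra_simps)

lemma cinner_scaleR_right: "cinner u (r *\<^sub>R v) = of_real r * cinner u v"
  by (simp add: cinner_def sum_distrib_left algebra_simps)

lemma cinner_scaleR_left: "cinner (r *\<^sub>R u) v = of_real r * cinner u v"
  by (simp add: cinner_def sum_distrib_left algebra_simps)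

lemma cinner_sum_right: "cinner u (sum f S) = (\<Sum>x\<in>S. cinner u (f x))"
  by (simp add: cinner_def sum_component sum_distrib_left) (rule sum.swap)

lemma cinner_zero_right [simp]: "cinner u 0 = 0"
  by (simp add: cinner_def)

lemma cinner_commute: "cinner v u = cnj (cinner u v)"
  by (simp add: cinner_def cnj_sum mult.commute)

lemma cinner_adjoint: "cinner u (A *v v) = cinner (adjoint A *v u) v"
  by (simp add: cinner_def adjoint_def matrix_vector_mult_def sum_distrib_left sum_distrib_right
      cnj_sum algebra_simps) (rule sum.swap)

lemma cinner_self: "cinner v v = of_real (\<Sum>i\<in>UNIV. (cmod (v$i))\<^sup>2)"
  unfolding cinner_def of_real_sum by (rule sum.cong) (simp_all only: complex_norm_square mult.commute)

lemma cinner_self_real: "of_real (Re (cinner v v)) = cinner v v"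
  by (simp add: cinner_self)

lemma cinner_self_nonneg: "0 \<le> Re (cinner v v)"
  by (simp add: cinner_self sum_nonneg)

lemma cinner_self_eq_0: "cinner v v = 0 \<longleftrightarrow> v = 0"
proof
  assume "cinner v v = 0"
  then have "(\<Sum>i\<in>UNIV. (cmod (v$i))\<^sup>2) = 0"
    by (metis cinner_self Re_complex_of_real zero_complex.simps(1))
  then have "\<forall>i\<in>UNIV. (cmod (v$i))\<^sup>2 = 0"
    by (subst (asm) sum_nonneg_eq_0_iff) auto
  then show "v = 0" by (simp add: vec_eq_iff)
qed simp

lemma Re_cinner_self_eq_0: "Re (cinner v v) = 0 \<longleftrightarrow> v = 0"
  by (metis cinner_self_eq_0 cinner_self_real of_real_0 zero_complex.simps(1))

lemma inner_eq_Re_cinner: "inner u (x::complex^'n) = Re (cinner u x)"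
  by (simp add: inner_vec_def cinner_def inner_complex_def Re_sum)

lemma norm_power2_eq_cinner: "(norm (x::complex^'n))\<^sup>2 = Re (cinner x x)"
  by (simp add: norm_vec_def L2_set_def cinner_self sum_nonneg)

lemma mult_cnj_eq_cmod_power2: "z * cnj z = (complex_of_real (cmod z))\<^sup>2"
  by (metis complex_norm_square of_real_power)

lemma adjoint_mult: "adjoint (A ** B) = adjoint B ** adjoint A"
  by (simp add: adjoint_def matrix_matrix_mult_def vec_eq_iff cnj_sum mult.commute)

lemma adjoint_add: "adjoint (A + B) = adjoint A + adjoint B"
  by (simp add: adjoint_def vec_eq_iff)

lemma adjoint_scaleR: "adjoint (r *\<^sub>R A) = r *\<^sub>R adjoint A"
  by (simp add: adjoint_def vec_eq_iff)

lemma adjoint_sum: "adjoint (sum f S) = (\<Sum>x\<in>S. adjoint (f x))"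
  by (simp add: adjoint_def vec_eq_iff sum_component cnj_sum)

lemma cinner_hermitian_real:
  assumes "adjoint A = A"
  shows "cinner x (A *v x) = of_real (Re (cinner x (A *v x)))"
proof -
  have "cinner x (A *v x) = cnj (cinner x (A *v x))"
    by (metis assms cinner_adjoint cinner_commute)
  then show ?thesis by (metis Reals_cnj_iff complex_is_Real_iff of_real_Re)
qed

lemma outer_mult_vec: "outer u v *v w = cinner v w *s u"
  by (simp add: outer_def cinner_def matrix_vector_mult_def vec_eq_iff vector_scalar_mult_def
      sum_distrib_left algebra_simps)

lemma outer_mult_left: "outer u v ** B = outer u (adjoint B *v v)"
  unfolding outer_def adjoint_def matrix_matrix_mult_def matrix_vector_mult_def
  by (simp add: vec_eq_iff sum_distrib_left cnj_sum mult_ac)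

lemma outer_mult_right: "(B::complex^_^_) ** outer u v = outer (B *v u) v"
  unfolding outer_def matrix_matrix_mult_def matrix_vector_mult_def
  by (simp add: vec_eq_iff sum_distrib_left mult_ac)

lemma outer_outer: "outer u v ** outer w x = outer (cinner v w *s u) x"
  by (simp add: outer_mult_right outer_mult_vec)

lemma adjoint_outer: "adjoint (outer u v) = outer v u"
  by (simp add: adjoint_def outer_def vec_eq_iff)

lemma outer_scaleR_left: "outer (r *\<^sub>R u) v = r *\<^sub>R outer u v"
  by (simp add: outer_def vec_eq_iff)

lemma outer_scaleR_right: "outer u (r *\<^sub>R v) = r *\<^sub>R outer u v"
  by (simp add: outer_def vec_eq_iff)

lemma outer_scale_of_real: "outer (of_real r *s u) v = r *\<^sub>R outer u v"
  by (simp add: outer_def vec_eq_iff vector_scalar_mult_def)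

lemma ctrace_outer: "ctrace (outer u v) = cinner v u"
  by (simp add: ctrace_def outer_def cinner_def mult.commute)

lemma ctrace_mult_commute: "ctrace (A ** B) = ctrace (B ** A)"
  by (simp add: ctrace_def matrix_matrix_mult_def mult.commute) (rule sum.swap)

lemma ctrace_scaleR: "ctrace (r *\<^sub>R A) = of_real r * ctrace A"
  by (simp add: ctrace_def sum_distrib_left)

lemma ctrace_sum: "ctrace (sum f S) = (\<Sum>x\<in>S. ctrace (f x))"
  by (simp add: ctrace_def sum_component) (rule sum.swap)

lemma ctrace_outer_mult: "ctrace (outer u v ** B) = cinner v (B *v u)"
  by (simp add: outer_mult_left ctrace_outer cinner_adjoint)

lemma matrix_mult_sum_left: "(sum f S) ** B = (\<Sum>x\<in>S. f x ** B)"
  by (simp add: matrix_matrix_mult_def vec_eq_iff sum_component sum_distrib_right) (intro allI sum.swap)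

lemma matrix_mult_sum_right: "B ** (sum f S) = (\<Sum>x\<in>S. B ** f x)"
  by (simp add: matrix_matrix_mult_def vec_eq_iff sum_component sum_distrib_left) (intro allI sum.swap)

lemma matrix_mult_scaleR_left: "(r *\<^sub>R (A::complex^'n^'m)) ** B = r *\<^sub>R (A ** B)"
  by (simp add: matrix_matrix_mult_def vec_eq_iff sum_distrib_left mult.assoc mult.left_commute)

lemma matrix_mult_scaleR_right: "(A::complex^'n^'m) ** (r *\<^sub>R B) = r *\<^sub>R (A ** B)"
  by (simp add: matrix_matrix_mult_def vec_eq_iff sum_distrib_left mult.assoc mult.left_commute)

lemma matrix_vector_mult_sum_left: "(sum f S) *v v = (\<Sum>x\<in>S. f x *v v)"
  by (simp add: matrix_vector_mult_def vec_eq_iff sum_component sum_distrib_right) (intro allI sum.swap)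

lemma matrix_vector_mult_scaleR_left: "(r *\<^sub>R (A::complex^'n^'m)) *v v = r *\<^sub>R (A *v v)"
  by (simp add: matrix_vector_mult_def vec_eq_iff sum_distrib_left mult.assoc)

lemma matrix_vector_mult_scale: "(A::complex^'n^'m) *v (c *s x) = c *s (A *v x)"
  by (simp add: matrix_vector_mult_def vector_scalar_mult_def vec_eq_iff sum_distrib_left mult_ac)

lemma onb_cinner_self: "onb \<alpha> \<Longrightarrow> cinner (\<alpha> i) (\<alpha> i) = 1"
  by (simp add: onb_def)

lemma onb_resolution_of_identity:
  assumes "onb (\<alpha>::'n::finite \<Rightarrow> complex^'n)"
  shows "(\<Sum>i\<in>UNIV. outer (\<alpha> i) (\<alpha> i)) = mat 1"
proof -
  let ?U = "(\<chi> r c. \<alpha> c $ r) :: complex^'n^'n"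
  have "adjoint ?U ** ?U = mat 1"
    using assms unfolding onb_def
    by (simp add: adjoint_def matrix_matrix_mult_def mat_def vec_eq_iff cinner_def)
  then have "?U ** adjoint ?U = mat 1"
    using matrix_left_right_inverse by blast
  moreover have "?U ** adjoint ?U = (\<Sum>i\<in>UNIV. outer (\<alpha> i) (\<alpha> i))"
    by (simp add: adjoint_def matrix_matrix_mult_def vec_eq_iff outer_def sum_component)
  ultimately show ?thesis by simp
qed

lemma onb_parseval:
  assumes "onb \<alpha>"
  shows "Re (cinner v v) = (\<Sum>i\<in>UNIV. (cmod (cinner (\<alpha> i) v))\<^sup>2)"
proof -
  have "cinner v v = cinner v ((\<Sum>i\<in>UNIV. outer (\<alpha> i) (\<alpha> i)) *v v)"
    by (simp add: onb_resolution_of_identity[OF assms])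
  also have "\<dots> = (\<Sum>i\<in>UNIV. cnj (cinner (\<alpha> i) v) * cinner (\<alpha> i) v)"
    by (simp add: matrix_vector_mult_sum_left outer_mult_vec cinner_sum_right cinner_scale_right
        cinner_commute[of v "\<alpha> _"] mult.commute)
  also have "\<dots> = of_real (\<Sum>i\<in>UNIV. (cmod (cinner (\<alpha> i) v))\<^sup>2)"
    unfolding of_real_sum by (rule sum.cong) (simp_all only: complex_norm_square mult.commute)
  finally show ?thesis by simp
qed

lemma onb_eigen_expansion:
  assumes "onb \<alpha>" "\<forall>i. A *v \<alpha> i = of_real (l i) *s \<alpha> i"
  shows "A = (\<Sum>i\<in>UNIV. l i *\<^sub>R outer (\<alpha> i) (\<alpha> i))"
proof -
  have "A = A ** (\<Sum>i\<in>UNIV. outer (\<alpha> i) (\<alpha> i))"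
    by (simp add: onb_resolution_of_identity[OF assms(1)])
  also have "\<dots> = (\<Sum>i\<in>UNIV. l i *\<^sub>R outer (\<alpha> i) (\<alpha> i))"
    using assms(2) by (simp only: matrix_mult_sum_right outer_mult_right outer_scale_of_real)
  finally show ?thesis .
qed

lemma onb_outer_mult:
  assumes "onb \<alpha>"
  shows "outer (\<alpha> i) (\<alpha> i) ** outer (\<alpha> j) (\<alpha> j) = (if i = j then outer (\<alpha> i) (\<alpha> i) else 0)"
  using assms unfolding outer_outer onb_def by (simp add: outer_def vec_eq_iff)

section \<open>The spectral theorem for Hermitian matrices\<close>

lemma exists_nonzero_orthogonal:
  fixes e :: "nat \<Rightarrow> complex^'n"
  assumes "k < CARD('n)"
  shows "\<exists>x. x \<noteq> 0 \<and> (\<forall>i<k. cinner (e i) x = 0)"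
proof -
  \<comment> \<open>Complex orthogonality to \<open>e i\<close> is real orthogonality to both \<open>e i\<close> and \<open>\<i> *s e i\<close>.\<close>
  let ?S = "(e ` {..<k}) \<union> ((\<lambda>i. \<i> *s e i) ` {..<k})"
  have "dim ?S \<le> card ?S" by (rule dim_le_card') auto
  also have "\<dots> \<le> card (e ` {..<k}) + card ((\<lambda>i. \<i> *s e i) ` {..<k})" by (rule card_Un_le)
  also have "\<dots> \<le> k + k" by (intro add_mono) (metis card_image_le card_lessThan finite_lessThan)+
  also have "\<dots> < DIM(complex^'n)" using assms by (simp add: DIM_cart)
  finally obtain x where x: "x \<noteq> 0" "\<And>y. y \<in> span ?S \<Longrightarrow> orthogonal x y"
    by (rule orthogonal_to_subspace_exists) blast
  have "cinner (e i) x = 0" if "i < k" for i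
  proof -
    have ik: "i \<in> {..<k}" using that by simp
    have "orthogonal x (e i)"
      by (rule x(2), rule span_base, rule UnI1, rule imageI, rule ik)
    moreover have "orthogonal x (\<i> *s e i)"
      by (rule x(2), rule span_base, rule UnI2, rule image_eqI[OF refl ik])
    ultimately have "inner (e i) x = 0" "inner (\<i> *s e i) x = 0"
      by (simp_all add: orthogonal_def inner_commute)
    then have "Re (cinner (e i) x) = 0" "Re (cinner (\<i> *s e i) x) = 0"
      by (simp_all add: inner_eq_Re_cinner)
    then show ?thesis by (simp add: cinner_scale_left complex_eq_iff)
  qed
  with x show ?thesis by blast
qed

lemma nonpos_if_quadratic_bound:
  fixes \<nu> C :: real
  assumes "\<And>t. 2 * t * \<nu> \<le> t\<^sup>2 * C"
  shows "\<nu> \<le> 0"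
proof (rule ccontr)
  assume "\<not> \<nu> \<le> 0"
  then have \<nu>: "\<nu> > 0" by simp
  define t where "t = \<nu> / (\<bar>C\<bar> + 1)"
  have t: "t > 0" using \<nu> by (simp add: t_def)
  have "2 * t * \<nu> \<le> t * (t * C)" using assms[of t] by (simp add: power2_eq_square mult.assoc)
  then have "2 * \<nu> \<le> t * C" using t by simp
  also have "t * C \<le> t * \<bar>C\<bar>" using t by (simp add: mult_left_mono)
  also have "t * \<bar>C\<bar> = \<nu> * (\<bar>C\<bar> / (\<bar>C\<bar> + 1))" by (simp add: t_def)
  also have "\<dots> < \<nu> * 1" using \<nu> by (intro mult_strict_left_mono) auto
  finally show False using \<nu> by simp
qed

lemma rayleigh_maximizer_exists:
  fixes A :: "complex^'n^'n"
  assumes "closed W" and W_scale: "\<And>c x. x \<in> W \<Longrightarrow> c *s x \<in> W" and "x0 \<in> W" "x0 \<noteq> 0"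
  shows "\<exists>v\<in>W. cinner v v = 1 \<and>
    (\<forall>y\<in>W. Re (cinner y (A *v y)) \<le> Re (cinner v (A *v v)) * Re (cinner y y))"
proof -
  define f where "f x = Re (cinner x (A *v x))" for x
  have W_scaleR: "r *\<^sub>R x \<in> W" if "x \<in> W" for x r
    using W_scale[OF that] by (simp add: scaleR_eq_scalar_mult)
  define K where "K = W \<inter> sphere 0 1"
  have "compact K" unfolding K_def using \<open>closed W\<close>
    by (metis compact_Int_closed compact_sphere inf_commute)
  moreover have "(1 / norm x0) *\<^sub>R x0 \<in> K" using assms W_scaleR by (simp add: K_def)
  moreover have "continuous_on K f"
    unfolding f_def cinner_def matrix_vector_mult_def by (intro continuous_intros)
  ultimately obtain v where v: "v \<in> K" and vmax: "\<And>y. y \<in> K \<Longrightarrow> f y \<le> f v"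
    using continuous_attains_sup[of K f] by blast
  have "v \<in> W" "cinner v v = 1"
    using v norm_power2_eq_cinner[of v] cinner_self_real[of v] by (auto simp: K_def)
  moreover have "f y \<le> f v * Re (cinner y y)" if "y \<in> W" for y
  proof (cases "y = 0")
    case False
    \<comment> \<open>the Rayleigh quotient is homogeneous of degree 0\<close>
    have "(1 / norm y) *\<^sub>R y \<in> K" using that False W_scaleR by (simp add: K_def)
    then have "f ((1 / norm y) *\<^sub>R y) \<le> f v" by (rule vmax)
    then have "(1 / norm y)\<^sup>2 * f y \<le> f v"
      by (simp add: f_def scaleR_eq_scalar_mult matrix_vector_mult_scale cinner_scale_left
          cinner_scale_right power2_eq_square)
    then have "f y \<le> f v * (norm y)\<^sup>2" using False by (simp add: field_simps power2_eq_square)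
    then show ?thesis by (simp add: norm_power2_eq_cinner)
  qed (simp add: f_def)
  ultimately show ?thesis by (auto simp: f_def)
qed

lemma rayleigh_maximizer_is_eigenvector:
  fixes A :: "complex^'n^'n"
  assumes herm: "adjoint A = A"
    and W_add: "\<And>x y. x \<in> W \<Longrightarrow> y \<in> W \<Longrightarrow> x + y \<in> W"
    and W_scale: "\<And>c x. x \<in> W \<Longrightarrow> c *s x \<in> W"
    and W_A: "\<And>x. x \<in> W \<Longrightarrow> A *v x \<in> W"
    and v: "v \<in> W" "cinner v v = 1"
    and max: "\<And>y. y \<in> W \<Longrightarrow> Re (cinner y (A *v y)) \<le> Re (cinner v (A *v v)) * Re (cinner y y)"
  shows "A *v v = cinner v (A *v v) *s v"
proof -
  define f where "f x = Re (cinner x (A *v x))" for x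
  define \<mu> where "\<mu> = cinner v (A *v v)"
  define u where "u = A *v v - \<mu> *s v"
  have Av: "A *v v = u + \<mu> *s v" by (simp add: u_def)
  have "u = A *v v + (- \<mu>) *s v"
    by (simp add: u_def vec_eq_iff vector_scalar_mult_def)
  then have uW: "u \<in> W" using W_add W_scale W_A v(1) by metis
  have vu: "cinner v u = 0" by (simp add: u_def cinner_diff_right cinner_scale_right v(2) \<mu>_def)
  have uv: "cinner u v = 0" using vu by (metis cinner_commute complex_cnj_zero)
  have uAv: "cinner u (A *v v) = cinner u u"
    unfolding Av by (simp add: cinner_add_right cinner_scale_right uv)
  have vAu: "cinner v (A *v u) = cnj (cinner u u)"
    using uAv herm by (metis cinner_adjoint cinner_commute)
  define \<nu> where "\<nu> = Re (cinner u u)"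
  have \<nu>: "cinner u u = of_real \<nu>" by (simp add: \<nu>_def cinner_self_real)
  \<comment> \<open>second-order perturbation of the maximiser in the direction \<open>u\<close>\<close>
  have "2 * t * \<nu> \<le> t\<^sup>2 * (f v * \<nu> - f u)" for t :: real
  proof -
    let ?y = "v + t *\<^sub>R u"
    have "?y \<in> W" using W_add W_scale v(1) uW by (simp add: scaleR_eq_scalar_mult)
    then have "f ?y \<le> f v * Re (cinner ?y ?y)" unfolding f_def by (rule max)
    moreover have "Re (cinner ?y ?y) = 1 + t\<^sup>2 * \<nu>"
      by (simp add: cinner_add_left cinner_add_right cinner_scaleR_left cinner_scaleR_right v(2)
          vu uv \<nu> power2_eq_square)
    moreover have "f ?y = f v + 2 * t * \<nu> + t\<^sup>2 * f u"
      by (simp add: f_def matrix_vector_right_distrib scaleR_eq_scalar_mult matrix_vector_mult_scale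
          cinner_add_left cinner_add_right cinner_scale_left cinner_scale_right uAv vAu \<nu>
          power2_eq_square algebra_simps)
    ultimately show ?thesis by (simp add: algebra_simps)
  qed
  then have "\<nu> \<le> 0" by (rule nonpos_if_quadratic_bound)
  then have "u = 0" using cinner_self_nonneg[of u] Re_cinner_self_eq_0[of u] by (simp add: \<nu>_def)
  then show ?thesis unfolding \<mu>_def[symmetric] using Av by simp
qed

lemma hermitian_eigenvector_orthogonal:
  fixes A :: "complex^'n^'n" and e :: "nat \<Rightarrow> complex^'n"
  assumes herm: "adjoint A = A" and "k < CARD('n)" and eig: "\<forall>i<k. \<exists>c. A *v e i = c *s e i"
  shows "\<exists>v. cinner v v = 1 \<and> (\<forall>i<k. cinner (e i) v = 0) \<and> (\<exists>c. A *v v = c *s v)"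
proof -
  define W where "W = {x::complex^'n. \<forall>i<k. cinner (e i) x = 0}"
  have "closed W"
  proof -
    have "W = (\<Inter>i\<in>{..<k}. {x. cinner (e i) x = 0})" by (auto simp: W_def)
    moreover have "closed {x. cinner (e i) x = 0}" for i
      unfolding cinner_def by (intro closed_Collect_eq continuous_intros)
    ultimately show ?thesis by auto
  qed
  have W_add: "x + y \<in> W" if "x \<in> W" "y \<in> W" for x y
    using that by (simp add: W_def cinner_add_right)
  have W_scale: "c *s x \<in> W" if "x \<in> W" for x c
    using that by (simp add: W_def cinner_scale_right)
  \<comment> \<open>\<open>W\<close> is \<open>A\<close>-invariant since \<open>A\<close> is self-adjoint and the \<open>e i\<close> are eigenvectors\<close>
  have W_A: "A *v x \<in> W" if "x \<in> W" for x
  proof -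
    have "cinner (e i) (A *v x) = 0" if "i < k" for i
    proof -
      obtain c where c: "A *v e i = c *s e i" using eig \<open>i < k\<close> by blast
      have "cinner (e i) (A *v x) = cinner (A *v e i) x" using herm by (simp add: cinner_adjoint)
      also have "\<dots> = 0" using \<open>x \<in> W\<close> \<open>i < k\<close> by (simp add: c cinner_scale_left W_def)
      finally show ?thesis .
    qed
    then show ?thesis by (simp add: W_def)
  qed
  obtain x0 where "x0 \<noteq> 0" "x0 \<in> W"
    using exists_nonzero_orthogonal[OF \<open>k < CARD('n)\<close>, of e] by (auto simp: W_def)
  with rayleigh_maximizer_exists[OF \<open>closed W\<close> W_scale]
  obtain v where v: "v \<in> W" "cinner v v = 1"
    and max: "\<forall>y\<in>W. Re (cinner y (A *v y)) \<le> Re (cinner v (A *v v)) * Re (cinner y y)"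
    by blast
  have "A *v v = cinner v (A *v v) *s v"
    by (rule rayleigh_maximizer_is_eigenvector[OF herm W_add W_scale W_A v]) (use max in blast)+
  with v show ?thesis unfolding W_def by blast
qed

lemma hermitian_orthonormal_eigenvectors:
  fixes A :: "complex^'n^'n"
  assumes herm: "adjoint A = A" and "k \<le> CARD('n)"
  shows "\<exists>e::nat \<Rightarrow> complex^'n. (\<forall>i<k. \<forall>j<k. cinner (e i) (e j) = (if i = j then 1 else 0)) \<and>
           (\<forall>i<k. \<exists>c. A *v e i = c *s e i)"
  using \<open>k \<le> CARD('n)\<close>
proof (induction k)
  case (Suc k)
  then obtain e where e1: "\<forall>i<k. \<forall>j<k. cinner (e i) (e j) = (if i = j then 1 else 0)"
    and e2: "\<forall>i<k. \<exists>c. A *v e i = c *s e i" by auto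
  obtain v where v: "cinner v v = 1" "\<forall>i<k. cinner (e i) v = 0" "\<exists>c. A *v v = c *s v"
    using hermitian_eigenvector_orthogonal[OF herm _ e2] Suc.prems by auto
  have "\<forall>i<k. cinner v (e i) = 0" using v(2) by (metis cinner_commute complex_cnj_zero)
  then show ?case using e1 e2 v
    by (intro exI[of _ "e(k := v)"]) (auto simp: less_Suc_eq)
qed simp

theorem hermitian_spectral:
  fixes A :: "complex^'n^'n"
  assumes herm: "adjoint A = A"
  obtains \<alpha> l where "onb \<alpha>" "\<forall>i. A *v \<alpha> i = of_real (l i) *s \<alpha> i"
proof -
  obtain e :: "nat \<Rightarrow> complex^'n"
    where e1: "\<forall>i<CARD('n). \<forall>j<CARD('n). cinner (e i) (e j) = (if i = j then 1 else 0)"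
      and e2: "\<forall>i<CARD('n). \<exists>c. A *v e i = c *s e i"
    using hermitian_orthonormal_eigenvectors[OF herm, of "CARD('n)"] by auto
  obtain h where h: "bij_betw h (UNIV::'n set) {0..<CARD('n)}"
    using ex_bij_betw_finite_nat[of "UNIV::'n set"] by auto
  have hlt: "h i < CARD('n)" for i using h by (auto simp: bij_betw_def)
  have hinj: "h i = h j \<longleftrightarrow> i = j" for i j using h by (auto simp: bij_betw_def inj_on_def)
  define \<alpha> where "\<alpha> i = e (h i)" for i
  have onb: "onb \<alpha>" unfolding onb_def \<alpha>_def using e1 hlt hinj by simp
  have "\<exists>c. A *v \<alpha> i = c *s \<alpha> i" for i unfolding \<alpha>_def using e2 hlt by blast
  then obtain c where c: "\<And>i. A *v \<alpha> i = c i *s \<alpha> i" by metis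
  \<comment> \<open>the eigenvalues are real because \<open>c i = \<langle>\<alpha> i|A|\<alpha> i\<rangle>\<close>\<close>
  have "c i = of_real (Re (c i))" for i
    using cinner_hermitian_real[OF herm, of "\<alpha> i"] onb by (simp add: c cinner_scale_right onb_def)
  then have "\<forall>i. A *v \<alpha> i = of_real (Re (c i)) *s \<alpha> i" using c by metis
  with onb show ?thesis by (rule that)
qed

section \<open>Positive semidefinite matrices and their square roots\<close>

lemma psd_hermitian: "psd A \<Longrightarrow> adjoint A = A"
  by (simp add: psd_def)

lemma psd_quadratic_form_nonneg: "psd A \<Longrightarrow> 0 \<le> Re (cinner v (A *v v))"
  by (simp add: psd_def)

lemma psd_spectral:
  assumes "psd A"
  obtains \<alpha> l where "onb \<alpha>" "\<forall>i. A *v \<alpha> i = of_real (l i) *s \<alpha> i" "\<forall>i. 0 \<le> l i"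
proof -
  obtain \<alpha> l where o: "onb \<alpha>" and ev: "\<forall>i. A *v \<alpha> i = of_real (l i) *s \<alpha> i"
    using hermitian_spectral[OF psd_hermitian[OF assms]] by blast
  have "0 \<le> l i" for i
    using psd_quadratic_form_nonneg[OF assms, of "\<alpha> i"] o ev by (simp add: cinner_scale_right onb_def)
  then show ?thesis using that o ev by blast
qed

lemma onb_diag_mult_vec:
  assumes "onb \<alpha>"
  shows "(\<Sum>i\<in>UNIV. s i *\<^sub>R outer (\<alpha> i) (\<alpha> i)) *v \<alpha> j = of_real (s j) *s \<alpha> j"
proof -
  have "(\<Sum>i\<in>UNIV. s i *\<^sub>R outer (\<alpha> i) (\<alpha> i)) *v \<alpha> j
      = (\<Sum>i\<in>UNIV. (if i = j then of_real (s j) *s \<alpha> j else 0))"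
    unfolding matrix_vector_mult_sum_left
    by (rule sum.cong) (use assms in \<open>auto simp: matrix_vector_mult_scaleR_left outer_mult_vec onb_def
        scaleR_eq_scalar_mult\<close>)
  then show ?thesis by simp
qed

lemma adjoint_onb_diag:
  "adjoint (\<Sum>i\<in>UNIV. s i *\<^sub>R outer (\<alpha> i) (\<alpha> i)) = (\<Sum>i\<in>UNIV. s i *\<^sub>R outer (\<alpha> i) (\<alpha> i))"
  by (simp add: adjoint_sum adjoint_scaleR adjoint_outer)

lemma onb_diag_mult:
  assumes "onb \<alpha>"
  shows "(\<Sum>i\<in>UNIV. s i *\<^sub>R outer (\<alpha> i) (\<alpha> i)) ** (\<Sum>i\<in>UNIV. t i *\<^sub>R outer (\<alpha> i) (\<alpha> i))
       = (\<Sum>i\<in>UNIV. (s i * t i) *\<^sub>R outer (\<alpha> i) (\<alpha> i))"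
proof -
  let ?T = "\<Sum>j\<in>UNIV. t j *\<^sub>R outer (\<alpha> j) (\<alpha> j)"
  have "(\<Sum>i\<in>UNIV. s i *\<^sub>R outer (\<alpha> i) (\<alpha> i)) ** ?T
      = (\<Sum>i\<in>UNIV. outer (of_real (s i) *s \<alpha> i) (\<alpha> i) ** ?T)"
    by (simp add: matrix_mult_sum_left outer_scale_of_real)
  also have "\<dots> = (\<Sum>i\<in>UNIV. outer (of_real (s i) *s \<alpha> i) (of_real (t i) *s \<alpha> i))"
    by (simp add: outer_mult_left adjoint_onb_diag onb_diag_mult_vec[OF assms])
  also have "\<dots> = (\<Sum>i\<in>UNIV. (s i * t i) *\<^sub>R outer (\<alpha> i) (\<alpha> i))"
    by (simp add: outer_scale_of_real flip: scaleR_eq_scalar_mult, simp add: outer_scaleR_right outer_scaleR_left mult.commute)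
  finally show ?thesis .
qed

lemma onb_diag_quadratic_form:
  assumes "onb \<alpha>"
  shows "cinner v ((\<Sum>i\<in>UNIV. s i *\<^sub>R outer (\<alpha> i) (\<alpha> i)) *v v)
       = of_real (\<Sum>i\<in>UNIV. s i * (cmod (cinner (\<alpha> i) v))\<^sup>2)"
proof -
  have "cinner v ((\<Sum>i\<in>UNIV. s i *\<^sub>R outer (\<alpha> i) (\<alpha> i)) *v v)
      = (\<Sum>i\<in>UNIV. of_real (s i) * (cinner (\<alpha> i) v * cinner v (\<alpha> i)))"
    by (simp add: matrix_vector_mult_sum_left cinner_sum_right matrix_vector_mult_scaleR_left
        cinner_scaleR_right outer_mult_vec cinner_scale_right)
  also have "\<dots> = of_real (\<Sum>i\<in>UNIV. s i * (cmod (cinner (\<alpha> i) v))\<^sup>2)"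
    unfolding of_real_sum
    by (rule sum.cong[OF refl]) (simp add: cinner_commute[of v "\<alpha> _"] mult_cnj_eq_cmod_power2)
  finally show ?thesis .
qed

lemma psd_onb_diag:
  assumes "onb \<alpha>" "\<forall>i. 0 \<le> s i"
  shows "psd (\<Sum>i\<in>UNIV. s i *\<^sub>R outer (\<alpha> i) (\<alpha> i))"
  unfolding psd_def using assms by (simp add: adjoint_onb_diag onb_diag_quadratic_form sum_nonneg)

lemma onb_eigen_quadratic_form:
  assumes "onb \<alpha>" and "\<forall>i. M *v \<alpha> i = of_real (l i) *s \<alpha> i"
  shows "Re (cinner x (M *v x)) = (\<Sum>i\<in>UNIV. l i * (cmod (cinner (\<alpha> i) x))\<^sup>2)"
  by (subst onb_eigen_expansion[OF assms]) (simp add: onb_diag_quadratic_form[OF assms(1)])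

lemma onb_eigen_quadratic_form_le:
  assumes "onb \<alpha>" and "\<forall>i. M *v \<alpha> i = of_real (l i) *s \<alpha> i" and "\<forall>i. l i \<le> c"
  shows "Re (cinner x (M *v x)) \<le> c * Re (cinner x x)"
proof -
  have "Re (cinner x (M *v x)) \<le> (\<Sum>i\<in>UNIV. c * (cmod (cinner (\<alpha> i) x))\<^sup>2)"
    unfolding onb_eigen_quadratic_form[OF assms(1,2)]
    using assms(3) by (intro sum_mono mult_right_mono) auto
  also have "\<dots> = c * Re (cinner x x)" by (simp add: onb_parseval[OF assms(1)] sum_distrib_left)
  finally show ?thesis .
qed

lemma onb_eigen_ctrace:
  assumes "onb \<alpha>" and "\<forall>i. M *v \<alpha> i = of_real (l i) *s \<alpha> i"
  shows "ctrace M = of_real (\<Sum>i\<in>UNIV. l i)"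
  by (subst onb_eigen_expansion[OF assms])
    (use assms(1) in \<open>simp add: ctrace_sum ctrace_scaleR ctrace_outer onb_def of_real_sum\<close>)

lemma psd_mult_self: "psd B \<Longrightarrow> psd (B ** B)"
  unfolding psd_def
  by (simp add: adjoint_mult flip: matrix_vector_mul_assoc)
    (metis cinner_adjoint cinner_self_nonneg cinner_self_real Reals_of_real)

lemma psd_square_root_eigenvector:
  assumes B: "psd B" and "B ** B = A" and ev: "A *v v = of_real l *s v" and "0 \<le> l"
  shows "B *v v = of_real (sqrt l) *s v"
proof -
  define s where "s = sqrt l"
  have "s \<ge> 0" and ss: "s * s = l" using \<open>0 \<le> l\<close> by (simp_all add: s_def)
  have BBv: "B *v (B *v v) = of_real l *s v"
    using ev \<open>B ** B = A\<close> by (simp add: matrix_vector_mul_assoc)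
  show ?thesis
  proof (cases "s = 0")
    case True
    have "cinner (B *v v) (B *v v) = cinner v (B *v (B *v v))"
      using psd_hermitian[OF B] by (simp add: cinner_adjoint)
    also have "\<dots> = 0" using BBv True ss by simp
    finally show ?thesis using True by (simp add: s_def cinner_self_eq_0)
  next
    case False
    \<comment> \<open>\<open>u\<close> is an eigenvector of \<open>B\<close> for the eigenvalue \<open>-s < 0\<close>, so it vanishes\<close>
    define u where "u = B *v v - of_real s *s v"
    have "B *v u = B *v (B *v v) - of_real s *s (B *v v)"
      by (simp add: u_def matrix_vector_mult_diff_distrib matrix_vector_mult_scale)
    also have "\<dots> = (- of_real s) *s u"
      unfolding BBv u_def ss[symmetric] by (simp add: vec_eq_iff vector_scalar_mult_def algebra_simps)
    finally have "cinner u (B *v u) = - of_real s * cinner u u"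
      by (simp add: cinner_scale_right cinner_neg_right)
    then have "Re (cinner u (B *v u)) = - s * Re (cinner u u)"
      by simp
    then have "Re (cinner u u) \<le> 0"
      using psd_quadratic_form_nonneg[OF B, of u] False \<open>s \<ge> 0\<close> by (simp add: mult_le_0_iff)
    then have "u = 0" using cinner_self_nonneg[of u] Re_cinner_self_eq_0[of u] by simp
    then show ?thesis by (simp add: u_def s_def)
  qed
qed

lemma psd_square_root_eq_onb_diag:
  assumes "onb \<alpha>" and ev: "\<forall>i. A *v \<alpha> i = of_real (l i) *s \<alpha> i" and "\<forall>i. 0 \<le> l i"
    and "psd B" "B ** B = A"
  shows "B = (\<Sum>i\<in>UNIV. sqrt (l i) *\<^sub>R outer (\<alpha> i) (\<alpha> i))"
proof (rule onb_eigen_expansion[OF \<open>onb \<alpha>\<close>], rule allI)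
  fix i show "B *v \<alpha> i = of_real (sqrt (l i)) *s \<alpha> i"
    using assms by (intro psd_square_root_eigenvector[OF \<open>psd B\<close> \<open>B ** B = A\<close>]) auto
qed

lemma msqrt_onb_diag:
  assumes o: "onb \<alpha>" and ev: "\<forall>i. A *v \<alpha> i = of_real (l i) *s \<alpha> i" and l: "\<forall>i. 0 \<le> l i"
  shows "msqrt A = (\<Sum>i\<in>UNIV. sqrt (l i) *\<^sub>R outer (\<alpha> i) (\<alpha> i))"
  unfolding msqrt_def
proof (rule the_equality)
  let ?B = "\<Sum>i\<in>UNIV. sqrt (l i) *\<^sub>R outer (\<alpha> i) (\<alpha> i)"
  have "?B ** ?B = (\<Sum>i\<in>UNIV. (sqrt (l i) * sqrt (l i)) *\<^sub>R outer (\<alpha> i) (\<alpha> i))"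
    by (rule onb_diag_mult[OF o])
  also have "\<dots> = A" using l onb_eigen_expansion[OF o ev] by simp
  finally show "psd ?B \<and> ?B ** ?B = A" using psd_onb_diag[OF o] l by simp
  show "C = ?B" if "psd C \<and> C ** C = A" for C
    using psd_square_root_eq_onb_diag[OF o ev l] that by blast
qed

lemma psd_msqrt:
  assumes "psd A" shows "psd (msqrt A)"
proof -
  obtain \<alpha> l where o: "onb \<alpha>" and ev: "\<forall>i. A *v \<alpha> i = of_real (l i) *s \<alpha> i" and l: "\<forall>i. 0 \<le> l i"
    using psd_spectral[OF assms] by blast
  show ?thesis unfolding msqrt_onb_diag[OF o ev l] using l by (intro psd_onb_diag[OF o]) simp
qed

lemma msqrt_mult_self:
  assumes "psd A" shows "msqrt A ** msqrt A = A"
proof -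
  obtain \<alpha> l where o: "onb \<alpha>" and ev: "\<forall>i. A *v \<alpha> i = of_real (l i) *s \<alpha> i" and l: "\<forall>i. 0 \<le> l i"
    using psd_spectral[OF assms] by blast
  show ?thesis
    unfolding msqrt_onb_diag[OF o ev l] onb_diag_mult[OF o] using l onb_eigen_expansion[OF o ev] by simp
qed

lemma msqrt_eqI:
  assumes "psd B" "B ** B = A" shows "msqrt A = B"
proof -
  have "psd A" using psd_mult_self[OF assms(1)] assms(2) by simp
  then obtain \<alpha> l where o: "onb \<alpha>" and ev: "\<forall>i. A *v \<alpha> i = of_real (l i) *s \<alpha> i"
    and l: "\<forall>i. 0 \<le> l i"
    by (rule psd_spectral)
  show ?thesis unfolding msqrt_onb_diag[OF o ev l] psd_square_root_eq_onb_diag[OF o ev l assms] ..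
qed

section \<open>Tensor products and classical-quantum states\<close>

lemma sum_UNIV_prod:
  "(\<Sum>p\<in>(UNIV::('a::finite \<times> 'b::finite) set). f p) = (\<Sum>a\<in>UNIV. \<Sum>b\<in>UNIV. f (a, b))"
  by (simp add: sum.cartesian_product UNIV_Times_UNIV[symmetric] del: UNIV_Times_UNIV)

text \<open>\<open>partial_cinner x \<psi> = (\<langle>x| \<otimes> I) |\<psi>\<rangle>\<close>, a vector of \<open>H\<^sub>b\<close>.\<close>

definition partial_cinner :: "complex^'a::finite \<Rightarrow> complex^('a \<times> 'b::finite) \<Rightarrow> complex^'b" where
  "partial_cinner x \<psi> = (\<chi> j. \<Sum>k\<in>UNIV. cnj (x$k) * \<psi>$(k,j))"

lemma kron_outer_mult_vec_nth:
  "(kron (outer x x) T *v \<psi>) $ (a, b) = x$a * (T *v partial_cinner x \<psi>) $ b"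
proof -
  have "(kron (outer x x) T *v \<psi>) $ (a, b)
      = (\<Sum>q1\<in>UNIV. \<Sum>q2\<in>UNIV. x$a * cnj (x$q1) * T$b$q2 * \<psi>$(q1,q2))"
    by (simp add: matrix_vector_mult_def kron_def outer_def sum_UNIV_prod)
  also have "\<dots> = (\<Sum>q2\<in>UNIV. \<Sum>q1\<in>UNIV. x$a * cnj (x$q1) * T$b$q2 * \<psi>$(q1,q2))"
    by (rule sum.swap)
  also have "\<dots> = x$a * (T *v partial_cinner x \<psi>) $ b"
    by (simp add: matrix_vector_mult_def partial_cinner_def sum_distrib_left mult_ac)
  finally show ?thesis .
qed

lemma cinner_kron_outer:
  "cinner \<psi> (kron (outer x x) T *v \<psi>) = cinner (partial_cinner x \<psi>) (T *v partial_cinner x \<psi>)"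
proof -
  have "cinner \<psi> (kron (outer x x) T *v \<psi>)
      = (\<Sum>a\<in>UNIV. \<Sum>b\<in>UNIV. cnj (\<psi>$(a,b)) * (x$a * (T *v partial_cinner x \<psi>) $ b))"
    by (simp add: cinner_def sum_UNIV_prod kron_outer_mult_vec_nth)
  also have "\<dots> = (\<Sum>b\<in>UNIV. \<Sum>a\<in>UNIV. cnj (\<psi>$(a,b)) * (x$a * (T *v partial_cinner x \<psi>) $ b))"
    by (rule sum.swap)
  also have "\<dots> = cinner (partial_cinner x \<psi>) (T *v partial_cinner x \<psi>)"
    by (simp add: cinner_def partial_cinner_def cnj_sum sum_distrib_right mult_ac)
  finally show ?thesis .
qed

lemma cinner_ptrace_b_outer:
  "cinner x (ptrace_b (outer \<psi> \<psi>) *v x) = cinner (partial_cinner x \<psi>) (partial_cinner x \<psi>)"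
proof -
  have "cinner x (ptrace_b (outer \<psi> \<psi>) *v x)
      = (\<Sum>i\<in>UNIV. \<Sum>i'\<in>UNIV. \<Sum>j\<in>UNIV. cnj (x$i) * (\<psi>$(i,j) * cnj (\<psi>$(i',j))) * x$i')"
    by (simp add: cinner_def ptrace_b_def outer_def matrix_vector_mult_def sum_distrib_left
        sum_distrib_right mult_ac)
  also have "\<dots> = (\<Sum>i\<in>UNIV. \<Sum>j\<in>UNIV. \<Sum>i'\<in>UNIV. cnj (x$i) * (\<psi>$(i,j) * cnj (\<psi>$(i',j))) * x$i')"
    by (rule sum.cong[OF refl], rule sum.swap)
  also have "\<dots> = (\<Sum>j\<in>UNIV. \<Sum>i\<in>UNIV. \<Sum>i'\<in>UNIV. cnj (x$i) * (\<psi>$(i,j) * cnj (\<psi>$(i',j))) * x$i')"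
    by (rule sum.swap)
  also have "\<dots> = cinner (partial_cinner x \<psi>) (partial_cinner x \<psi>)"
    by (simp add: cinner_def partial_cinner_def cnj_sum sum_distrib_left sum_distrib_right mult_ac)
  finally show ?thesis .
qed

lemma adjoint_kron: "adjoint (kron A B) = kron (adjoint A) (adjoint B)"
  by (simp add: adjoint_def kron_def vec_eq_iff)

lemma ctrace_kron: "ctrace (kron A B) = ctrace A * ctrace B"
  by (simp add: ctrace_def kron_def sum_UNIV_prod sum_product)

lemma kron_mult: "kron A B ** kron C D = kron (A ** C) (B ** D)"
  by (simp add: kron_def matrix_matrix_mult_def vec_eq_iff sum_UNIV_prod sum_product mult_ac)

lemma kron_zero_left [simp]: "kron 0 B = 0"
  by (simp add: kron_def vec_eq_iff)

lemma adjoint_ptrace_b: "adjoint (ptrace_b R) = ptrace_b (adjoint R)"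
  by (simp add: adjoint_def ptrace_b_def vec_eq_iff cnj_sum)

lemma ctrace_ptrace_b: "ctrace (ptrace_b R) = ctrace R"
  by (simp add: ctrace_def ptrace_b_def sum_UNIV_prod)

lemma psd_zero: "psd 0"
  by (simp add: psd_def adjoint_def vec_eq_iff)

lemma psd_add: "psd A \<Longrightarrow> psd B \<Longrightarrow> psd (A + B)"
  unfolding psd_def
  by (simp add: adjoint_add matrix_vector_mult_add_rdistrib cinner_add_right complex_is_Real_iff)

lemma psd_scaleR: "psd A \<Longrightarrow> 0 \<le> r \<Longrightarrow> psd (r *\<^sub>R A)"
  unfolding psd_def
  by (simp add: adjoint_scaleR matrix_vector_mult_scaleR_left cinner_scaleR_right complex_is_Real_iff)

lemma psd_sum: "(\<And>x. x \<in> S \<Longrightarrow> psd (f x)) \<Longrightarrow> psd (sum f S)"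
  by (induction S rule: infinite_finite_induct) (simp_all add: psd_zero psd_add)

lemma psd_outer: "psd (outer x x)"
  unfolding psd_def
  by (simp add: adjoint_outer outer_mult_vec cinner_scale_right cinner_commute[of x]
      mult.commute mult_cnj_eq_cmod_power2 complex_is_Real_iff flip: of_real_power)

lemma psd_kron_outer: "psd T \<Longrightarrow> psd (kron (outer x x) T)"
  unfolding psd_def by (simp add: adjoint_kron adjoint_outer cinner_kron_outer)

lemma density_outer: "cinner x x = 1 \<Longrightarrow> density (outer x x)"
  by (simp add: density_def psd_outer ctrace_outer)

lemma density_cq_state:
  assumes "onb \<alpha>" and "\<sigma> \<in> cq_states \<alpha>"
  shows "density \<sigma>"
proof -
  obtain p \<tau> where p: "\<forall>i. 0 \<le> p i" "(\<Sum>i\<in>UNIV. p i) = 1" and t: "\<forall>i. density (\<tau> i)"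
    and \<sigma>: "\<sigma> = (\<Sum>i\<in>UNIV. p i *\<^sub>R kron (outer (\<alpha> i) (\<alpha> i)) (\<tau> i))"
    using assms(2) unfolding cq_states_def by blast
  have "psd \<sigma>" unfolding \<sigma> using p t
    by (intro psd_sum psd_scaleR psd_kron_outer) (auto simp: density_def)
  moreover have "ctrace \<sigma> = 1" unfolding \<sigma> using p t assms(1)
    by (simp add: ctrace_sum ctrace_scaleR ctrace_kron ctrace_outer density_def onb_def
        flip: of_real_sum)
  ultimately show ?thesis by (simp add: density_def)
qed

lemma cq_states_nonempty: "cq_states (\<alpha>::'a::finite \<Rightarrow> complex^'a) \<noteq> ({} :: ('a \<times> 'b::finite) cmat set)"
proof -
  define e where "e = axis (undefined::'b) (1::complex)"
  have "cinner e e = (\<Sum>i\<in>(UNIV::'b set). if i = undefined then 1 else 0)"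
    unfolding e_def cinner_def axis_def by (rule sum.cong) auto
  then have d: "density (outer e e)" by (simp add: density_outer)
  let ?p = "\<lambda>i::'a. 1 / real CARD('a)"
  have "(\<Sum>i\<in>UNIV. ?p i *\<^sub>R kron (outer (\<alpha> i) (\<alpha> i)) (outer e e)) \<in> (cq_states \<alpha> :: ('a \<times> 'b) cmat set)"
    unfolding cq_states_def
    by (rule CollectI, rule exI[of _ ?p], rule exI[of _ "\<lambda>_. outer e e"]) (simp add: d)
  then show ?thesis by blast
qed

lemma cq_quadratic_form:
  "cinner \<psi> ((\<Sum>i\<in>UNIV. p i *\<^sub>R kron (outer (\<beta> i) (\<beta> i)) (T i)) *v \<psi>)
   = (\<Sum>i\<in>UNIV. of_real (p i) * cinner (partial_cinner (\<beta> i) \<psi>) (T i *v partial_cinner (\<beta> i) \<psi>))"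
  by (simp add: matrix_vector_mult_sum_left cinner_sum_right matrix_vector_mult_scaleR_left
      cinner_scaleR_right cinner_kron_outer)

lemma msqrt_cq_state:
  assumes o: "onb \<beta>" and p: "\<forall>i. 0 \<le> p i" and t: "\<forall>i. density (\<tau> i)"
  shows "msqrt (\<Sum>i\<in>UNIV. p i *\<^sub>R kron (outer (\<beta> i) (\<beta> i)) (\<tau> i))
       = (\<Sum>i\<in>UNIV. sqrt (p i) *\<^sub>R kron (outer (\<beta> i) (\<beta> i)) (msqrt (\<tau> i)))"
proof (rule msqrt_eqI)
  have tp: "psd (\<tau> i)" for i using t by (simp add: density_def)
  show "psd (\<Sum>i\<in>UNIV. sqrt (p i) *\<^sub>R kron (outer (\<beta> i) (\<beta> i)) (msqrt (\<tau> i)))"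
    using p psd_msqrt[OF tp] by (intro psd_sum psd_scaleR psd_kron_outer) auto
  let ?K = "\<lambda>i. kron (outer (\<beta> i) (\<beta> i)) (msqrt (\<tau> i))"
  have KK: "?K i ** ?K j = (if i = j then kron (outer (\<beta> i) (\<beta> i)) (\<tau> i) else 0)" for i j
    using msqrt_mult_self[OF tp] by (simp add: kron_mult onb_outer_mult[OF o])
  have "(\<Sum>i\<in>UNIV. sqrt (p i) *\<^sub>R ?K i) ** (\<Sum>j\<in>UNIV. sqrt (p j) *\<^sub>R ?K j)
      = (\<Sum>i\<in>UNIV. \<Sum>j\<in>UNIV. (sqrt (p i) * sqrt (p j)) *\<^sub>R (?K j ** ?K i))"
    by (simp add: matrix_mult_sum_left matrix_mult_sum_right matrix_mult_scaleR_left
        matrix_mult_scaleR_right scaleR_sum_right mult.commute)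
  also have "\<dots> = (\<Sum>i\<in>UNIV. \<Sum>j\<in>UNIV. (if j = i then p i *\<^sub>R kron (outer (\<beta> i) (\<beta> i)) (\<tau> i) else 0))"
    by (rule sum.cong[OF refl], rule sum.cong[OF refl])
      (use p in \<open>auto simp: KK real_sqrt_mult[symmetric]\<close>)
  also have "\<dots> = (\<Sum>i\<in>UNIV. p i *\<^sub>R kron (outer (\<beta> i) (\<beta> i)) (\<tau> i))"
    by simp
  finally show "(\<Sum>i\<in>UNIV. sqrt (p i) *\<^sub>R ?K i) ** (\<Sum>j\<in>UNIV. sqrt (p j) *\<^sub>R ?K j)
      = (\<Sum>i\<in>UNIV. p i *\<^sub>R kron (outer (\<beta> i) (\<beta> i)) (\<tau> i))" .
qed

lemma density_spectral:
  assumes "density \<rho>"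
  obtains \<gamma> r where "onb \<gamma>" "\<forall>i. \<rho> *v \<gamma> i = of_real (r i) *s \<gamma> i" "\<forall>i. 0 \<le> r i"
    "(\<Sum>i\<in>UNIV. r i) = 1"
proof -
  obtain \<gamma> r where o: "onb \<gamma>" and ev: "\<forall>i. \<rho> *v \<gamma> i = of_real (r i) *s \<gamma> i" and r: "\<forall>i. 0 \<le> r i"
    using psd_spectral[of \<rho>] assms unfolding density_def by blast
  have "(\<Sum>i\<in>UNIV. r i) = 1"
    using onb_eigen_ctrace[OF o ev] assms unfolding density_def by (metis of_real_eq_1_iff)
  with o ev r show ?thesis by (rule that)
qed

lemma le_1_if_nonneg_sum_eq_1:
  fixes r :: "'n::finite \<Rightarrow> real"
  assumes "\<forall>i. 0 \<le> r i" "(\<Sum>i\<in>UNIV. r i) = 1"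
  shows "r i \<le> 1"
  using member_le_sum[of i UNIV r] assms by simp

lemma density_quadratic_form_le:
  assumes "density \<tau>" shows "Re (cinner x (\<tau> *v x)) \<le> Re (cinner x x)"
proof -
  obtain \<alpha> l where o: "onb \<alpha>" and ev: "\<forall>i. \<tau> *v \<alpha> i = of_real (l i) *s \<alpha> i"
    and "\<forall>i. 0 \<le> l i" "(\<Sum>i\<in>UNIV. l i) = 1"
    using density_spectral[OF assms] .
  then have "\<forall>i. l i \<le> 1" using le_1_if_nonneg_sum_eq_1 by blast
  then show ?thesis using onb_eigen_quadratic_form_le[OF o ev, of 1] by simp
qed

lemma msqrt_density_quadratic_form_le:
  assumes "density \<tau>" shows "Re (cinner x (msqrt \<tau> *v x)) \<le> Re (cinner x x)"
proof -
  obtain \<alpha> l where o: "onb \<alpha>" and ev: "\<forall>i. \<tau> *v \<alpha> i = of_real (l i) *s \<alpha> i"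
    and l: "\<forall>i. 0 \<le> l i" "(\<Sum>i\<in>UNIV. l i) = 1"
    using density_spectral[OF assms] .
  have "\<forall>i. msqrt \<tau> *v \<alpha> i = of_real (sqrt (l i)) *s \<alpha> i"
    unfolding msqrt_onb_diag[OF o ev l(1)] by (simp add: onb_diag_mult_vec[OF o])
  moreover have "\<forall>i. sqrt (l i) \<le> 1" using le_1_if_nonneg_sum_eq_1[OF l] by simp
  ultimately show ?thesis using onb_eigen_quadratic_form_le[OF o] by fastforce
qed

lemma ctrace_onb_diag_mult:
  "ctrace ((\<Sum>i\<in>UNIV. s i *\<^sub>R outer (\<alpha> i) (\<alpha> i)) ** B)
   = (\<Sum>i\<in>UNIV. of_real (s i) * cinner (\<alpha> i) (B *v \<alpha> i))"
  by (simp add: matrix_mult_sum_left matrix_mult_scaleR_left ctrace_sum ctrace_scaleR ctrace_outer_mult)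

lemma fidelity_bounds:
  fixes \<rho> \<sigma> :: "'n::finite cmat"
  assumes r: "density \<rho>" and s: "density \<sigma>"
  shows "0 \<le> fidelity \<rho> \<sigma> \<and> fidelity \<rho> \<sigma> \<le> real CARD('n)"
proof -
  let ?S = "msqrt \<sigma>"
  have Sp: "psd ?S" and SS: "?S ** ?S = \<sigma>"
    using psd_msqrt msqrt_mult_self s by (auto simp: density_def)
  define M where "M = ?S ** \<rho> ** ?S"
  have "psd M"
  proof -
    have rh: "adjoint \<rho> = \<rho>" using r by (simp add: density_def psd_def)
    have "adjoint M = M"
      unfolding M_def adjoint_mult psd_hermitian[OF Sp] rh by (simp only: matrix_mul_assoc)
    moreover have "cinner v (M *v v) = cinner (?S *v v) (\<rho> *v (?S *v v))" for v
      unfolding M_def using psd_hermitian[OF Sp] by (simp add: cinner_adjoint flip: matrix_vector_mul_assoc)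
    ultimately show ?thesis using r by (simp add: psd_def density_def)
  qed
  then obtain \<beta> m where o: "onb \<beta>" and ev: "\<forall>i. M *v \<beta> i = of_real (m i) *s \<beta> i"
    and m: "\<forall>i. 0 \<le> m i"
    by (rule psd_spectral)
  obtain \<gamma> r where og: "onb \<gamma>" and evr: "\<forall>i. \<rho> *v \<gamma> i = of_real (r i) *s \<gamma> i"
    and rr: "\<forall>i. 0 \<le> r i" "(\<Sum>i\<in>UNIV. r i) = 1"
    using density_spectral[OF \<open>density \<rho>\<close>] .
  \<comment> \<open>\<open>Tr M = Tr(\<rho> \<sigma>) \<le> 1\<close>, so every eigenvalue of \<open>M\<close> is at most 1\<close>
  have "ctrace M = ctrace (\<rho> ** \<sigma>)"
    by (metis M_def SS ctrace_mult_commute matrix_mul_assoc)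
  also have "\<dots> = (\<Sum>i\<in>UNIV. of_real (r i) * cinner (\<gamma> i) (\<sigma> *v \<gamma> i))"
    by (subst onb_eigen_expansion[OF og evr]) (rule ctrace_onb_diag_mult)
  finally have "Re (ctrace M) = (\<Sum>i\<in>UNIV. r i * Re (cinner (\<gamma> i) (\<sigma> *v \<gamma> i)))" by simp
  also have "\<dots> \<le> (\<Sum>i\<in>UNIV. r i * 1)"
  proof (intro sum_mono mult_left_mono)
    show "Re (cinner (\<gamma> i) (\<sigma> *v \<gamma> i)) \<le> 1" for i
      using density_quadratic_form_le[OF s, of "\<gamma> i"] onb_cinner_self[OF og] by simp
  qed (use rr in auto)
  finally have "(\<Sum>i\<in>UNIV. m i) \<le> 1" using onb_eigen_ctrace[OF o ev] rr(2) by simp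
  then have "m i \<le> 1" for i using m member_le_sum[of i UNIV m] by simp
  moreover have "fidelity \<rho> \<sigma> = (\<Sum>i\<in>UNIV. sqrt (m i))"
    unfolding fidelity_def M_def[symmetric] msqrt_onb_diag[OF o ev m]
    using o by (simp add: ctrace_sum ctrace_scaleR ctrace_outer onb_def)
  ultimately show ?thesis
    using m sum_mono[of UNIV "\<lambda>i. sqrt (m i)" "\<lambda>_. 1"] by (simp add: sum_nonneg)
qed

lemma affinity_bounds:
  fixes \<rho> \<sigma> :: "'n::finite cmat"
  assumes r: "density \<rho>" and s: "density \<sigma>"
  shows "0 \<le> affinity \<rho> \<sigma> \<and> affinity \<rho> \<sigma> \<le> real CARD('n)"
proof -
  obtain \<gamma> r where og: "onb \<gamma>" and ev: "\<forall>i. \<rho> *v \<gamma> i = of_real (r i) *s \<gamma> i"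
    and rr: "\<forall>i. 0 \<le> r i" "(\<Sum>i\<in>UNIV. r i) = 1"
    using density_spectral[OF r] .
  define a where "a i = sqrt (r i) * Re (cinner (\<gamma> i) (msqrt \<sigma> *v \<gamma> i))" for i
  have "affinity \<rho> \<sigma> = (\<Sum>i\<in>UNIV. a i)"
    unfolding affinity_def a_def msqrt_onb_diag[OF og ev rr(1)] ctrace_onb_diag_mult by (simp add: Re_sum)
  moreover have "0 \<le> a i" "a i \<le> 1" for i
  proof -
    have "0 \<le> Re (cinner (\<gamma> i) (msqrt \<sigma> *v \<gamma> i))"
      using s by (intro psd_quadratic_form_nonneg psd_msqrt) (simp add: density_def)
    moreover have "Re (cinner (\<gamma> i) (msqrt \<sigma> *v \<gamma> i)) \<le> 1"
      using msqrt_density_quadratic_form_le[OF s, of "\<gamma> i"] onb_cinner_self[OF og] by simp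
    moreover have "sqrt (r i) \<le> 1" using le_1_if_nonneg_sum_eq_1[OF rr] by simp
    ultimately show "0 \<le> a i" "a i \<le> 1" using rr(1) by (simp_all add: a_def mult_le_one)
  qed
  ultimately show ?thesis using sum_mono[of UNIV a "\<lambda>_. 1"] by (simp add: sum_nonneg)
qed

section \<open>Fidelity and affinity of a pure state with classical-quantum states\<close>

lemma msqrt_outer: "msqrt (outer \<phi> \<phi>) = (1 / sqrt (Re (cinner \<phi> \<phi>))) *\<^sub>R outer \<phi> \<phi>"
proof (rule msqrt_eqI)
  let ?n = "Re (cinner \<phi> \<phi>)"
  show "psd ((1 / sqrt ?n) *\<^sub>R outer \<phi> \<phi>)"
    using cinner_self_nonneg[of \<phi>] by (intro psd_scaleR psd_outer) simp
  show "(1 / sqrt ?n) *\<^sub>R outer \<phi> \<phi> ** (1 / sqrt ?n) *\<^sub>R outer \<phi> \<phi> = outer \<phi> \<phi>"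
  proof (cases "?n = 0")
    case True
    then have "outer \<phi> \<phi> = 0" by (simp add: Re_cinner_self_eq_0 outer_def vec_eq_iff)
    then show ?thesis by (simp add: matrix_mult_scaleR_left matrix_matrix_mult_def vec_eq_iff)
  next
    case False
    then have "?n > 0" using cinner_self_nonneg[of \<phi>] by simp
    have "(1 / sqrt ?n) *\<^sub>R outer \<phi> \<phi> ** (1 / sqrt ?n) *\<^sub>R outer \<phi> \<phi>
        = ((1 / sqrt ?n) * (1 / sqrt ?n)) *\<^sub>R outer (cinner \<phi> \<phi> *s \<phi>) \<phi>"
      by (simp add: matrix_mult_scaleR_left matrix_mult_scaleR_right outer_outer)
    also have "\<dots> = ((1 / sqrt ?n) * (1 / sqrt ?n) * ?n) *\<^sub>R outer \<phi> \<phi>"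
      by (subst cinner_self_real[symmetric]) (simp add: outer_scale_of_real)
    also have "(1 / sqrt ?n) * (1 / sqrt ?n) * ?n = 1"
      using \<open>?n > 0\<close> by (simp add: field_simps real_sqrt_mult[symmetric])
    finally show ?thesis by simp
  qed
qed

lemma msqrt_outer_unit: "cinner \<psi> \<psi> = 1 \<Longrightarrow> msqrt (outer \<psi> \<psi>) = outer \<psi> \<psi>"
  by (simp add: msqrt_outer)

lemma fidelity_outer_left:
  assumes "psd \<sigma>"
  shows "fidelity (outer \<psi> \<psi>) \<sigma> = sqrt (Re (cinner \<psi> (\<sigma> *v \<psi>)))"
proof -
  let ?S = "msqrt \<sigma>"
  have S: "adjoint ?S = ?S" using psd_hermitian[OF psd_msqrt[OF assms]] .
  define \<phi> where "\<phi> = ?S *v \<psi>"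
  have "?S ** outer \<psi> \<psi> ** ?S = outer \<phi> \<phi>"
    unfolding \<phi>_def outer_mult_right outer_mult_left S ..
  moreover have "cinner \<phi> \<phi> = cinner \<psi> (\<sigma> *v \<psi>)"
    using cinner_adjoint[of \<psi> ?S "?S *v \<psi>"] msqrt_mult_self[OF assms]
    unfolding \<phi>_def S by (simp add: matrix_vector_mul_assoc)
  moreover have "(1 / sqrt r) * r = sqrt r" if "r \<ge> 0" for r :: real
    using that by (cases "r = 0") (simp_all add: field_simps real_sqrt_mult[symmetric])
  ultimately show ?thesis
    using cinner_self_nonneg[of \<phi>]
    by (simp add: fidelity_def msqrt_outer ctrace_scaleR ctrace_outer)
qed

lemma affinity_outer_left:
  assumes "cinner \<psi> \<psi> = 1"
  shows "affinity (outer \<psi> \<psi>) \<sigma> = Re (cinner \<psi> (msqrt \<sigma> *v \<psi>))"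
  by (simp add: affinity_def msqrt_outer_unit[OF assms] ctrace_outer_mult)

lemma exists_unit_vector_aligned:
  "\<exists>w. cinner w w = 1 \<and> Re (cinner \<phi> (outer w w *v \<phi>)) = Re (cinner \<phi> \<phi>)"
proof (cases "\<phi> = 0")
  case True
  define e where "e = axis (undefined::'a) (1::complex)"
  have "cinner e e = (\<Sum>i\<in>(UNIV::'a set). if i = undefined then 1 else 0)"
    unfolding e_def cinner_def axis_def by (rule sum.cong) auto
  then show ?thesis using True by (intro exI[of _ e]) simp
next
  case False
  define n where "n = Re (cinner \<phi> \<phi>)"
  have "n > 0" using False cinner_self_nonneg[of \<phi>] Re_cinner_self_eq_0[of \<phi>] unfolding n_def by linarith
  have \<phi>: "cinner \<phi> \<phi> = of_real n" unfolding n_def by (simp only: cinner_self_real)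
  let ?c = "1 / sqrt n"
  define w where "w = ?c *\<^sub>R \<phi>"
  have "cinner w w = of_real ?c * (of_real ?c * cinner \<phi> \<phi>)"
    by (simp only: w_def cinner_scaleR_left cinner_scaleR_right)
  also have "\<dots> = of_real (?c * ?c * n)" by (simp only: \<phi> of_real_mult mult.assoc)
  also have "?c * ?c * n = 1" using \<open>n > 0\<close> by (simp add: field_simps real_sqrt_mult[symmetric])
  finally have "cinner w w = 1" by simp
  moreover have "cinner \<phi> (outer w w *v \<phi>) = cinner w \<phi> * cinner \<phi> w"
    by (simp add: outer_mult_vec cinner_scale_right mult.commute)
  moreover have "\<dots> = of_real (?c * ?c * (n * n))"
    by (simp only: w_def cinner_scaleR_left cinner_scaleR_right \<phi> of_real_mult mult_ac)
  moreover have "?c * ?c * (n * n) = n"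
    using \<open>n > 0\<close> by (simp add: field_simps real_sqrt_mult[symmetric])
  ultimately show ?thesis unfolding n_def by auto
qed

lemma ptrace_b_outer_eigenvalues:
  fixes \<psi> :: "complex^('a::finite \<times> 'b::finite)"
  assumes "cinner \<psi> \<psi> = 1" and o: "onb \<alpha>"
    and ev: "\<forall>i. ptrace_b (outer \<psi> \<psi>) *v \<alpha> i = of_real (l i) *s \<alpha> i"
  shows "l i = Re (cinner (partial_cinner (\<alpha> i) \<psi>) (partial_cinner (\<alpha> i) \<psi>))"
    and "(\<Sum>i\<in>UNIV. l i) = 1"
proof -
  have "cinner (\<alpha> i) (ptrace_b (outer \<psi> \<psi>) *v \<alpha> i) = of_real (l i)"
    using ev onb_cinner_self[OF o] by (simp add: cinner_scale_right)
  then show "l i = Re (cinner (partial_cinner (\<alpha> i) \<psi>) (partial_cinner (\<alpha> i) \<psi>))"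
    by (simp add: cinner_ptrace_b_outer)
  have "ctrace (ptrace_b (outer \<psi> \<psi>)) = 1"
    using assms(1) by (simp add: ctrace_ptrace_b ctrace_outer)
  then show "(\<Sum>i\<in>UNIV. l i) = 1"
    unfolding onb_eigen_ctrace[OF o ev] by (rule of_real_eq_1_iff[THEN iffD1])
qed

lemma cq_state_expectation_le_max_eigenvalue:
  fixes \<psi> :: "complex^('a::finite \<times> 'b::finite)"
  assumes o: "onb \<alpha>" and ev: "\<forall>i. ptrace_b (outer \<psi> \<psi>) *v \<alpha> i = of_real (l i) *s \<alpha> i"
    and l: "\<forall>i. l i \<le> c" and "onb \<beta>" and "\<sigma> \<in> cq_states \<beta>"
  shows "Re (cinner \<psi> (\<sigma> *v \<psi>)) \<le> c"
proof -
  obtain p \<tau> where p: "\<forall>i. 0 \<le> p i" "(\<Sum>i\<in>UNIV. p i) = 1" and t: "\<forall>i. density (\<tau> i)"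
    and \<sigma>: "\<sigma> = (\<Sum>i\<in>UNIV. p i *\<^sub>R kron (outer (\<beta> i) (\<beta> i)) (\<tau> i))"
    using \<open>\<sigma> \<in> cq_states \<beta>\<close> unfolding cq_states_def by blast
  have "Re (cinner \<psi> (\<sigma> *v \<psi>))
      = (\<Sum>i\<in>UNIV. p i * Re (cinner (partial_cinner (\<beta> i) \<psi>) (\<tau> i *v partial_cinner (\<beta> i) \<psi>)))"
    unfolding \<sigma> cq_quadratic_form by (simp add: Re_sum)
  also have "\<dots> \<le> (\<Sum>i\<in>UNIV. p i * c)"
  proof (intro sum_mono mult_left_mono)
    fix i
    have "Re (cinner (partial_cinner (\<beta> i) \<psi>) (\<tau> i *v partial_cinner (\<beta> i) \<psi>))
        \<le> Re (cinner (\<beta> i) (ptrace_b (outer \<psi> \<psi>) *v \<beta> i))"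
      unfolding cinner_ptrace_b_outer using density_quadratic_form_le t by blast
    also have "\<dots> \<le> c"
      using onb_eigen_quadratic_form_le[OF o ev l, of "\<beta> i"] onb_cinner_self[OF \<open>onb \<beta>\<close>, of i]
      by simp
    finally show "Re (cinner (partial_cinner (\<beta> i) \<psi>) (\<tau> i *v partial_cinner (\<beta> i) \<psi>)) \<le> c" .
  qed (use p in simp)
  also have "\<dots> = c" using p by (simp flip: sum_distrib_right)
  finally show ?thesis .
qed

text \<open>The bound is attained by \<open>|\<alpha>\<^sub>m\<rangle>\<langle>\<alpha>\<^sub>m| \<otimes> |w\<rangle>\<langle>w|\<close> with \<open>w\<close> parallel to \<open>(\<langle>\<alpha>\<^sub>m| \<otimes> I)|\<psi>\<rangle>\<close>.\<close>

lemma cq_state_expectation_eq_eigenvalue: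
  fixes \<psi> :: "complex^('a::finite \<times> 'b::finite)"
  assumes "cinner \<psi> \<psi> = 1" "onb \<alpha>" "\<forall>i. ptrace_b (outer \<psi> \<psi>) *v \<alpha> i = of_real (l i) *s \<alpha> i"
  shows "\<exists>\<sigma>\<in>cq_states \<alpha>. Re (cinner \<psi> (\<sigma> *v \<psi>)) = l m"
proof -
  obtain w where w: "cinner w w = 1"
    "Re (cinner (partial_cinner (\<alpha> m) \<psi>) (outer w w *v partial_cinner (\<alpha> m) \<psi>)) = l m"
    unfolding ptrace_b_outer_eigenvalues(1)[OF assms] by (rule exE[OF exists_unit_vector_aligned]) blast
  define q where "q i = (if i = m then 1 else (0::real))" for i
  define \<sigma> where "\<sigma> = (\<Sum>i\<in>UNIV. q i *\<^sub>R kron (outer (\<alpha> i) (\<alpha> i)) (outer w w))"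
  have "\<sigma> \<in> cq_states \<alpha>"
    unfolding cq_states_def \<sigma>_def
    by (rule CollectI, rule exI[of _ q], rule exI[of _ "\<lambda>_. outer w w"])
      (simp add: q_def density_outer[OF w(1)])
  moreover have "Re (cinner \<psi> (\<sigma> *v \<psi>)) = l m"
  proof -
    have "Re (cinner \<psi> (\<sigma> *v \<psi>))
        = (\<Sum>i\<in>UNIV. q i * Re (cinner (partial_cinner (\<alpha> i) \<psi>) (outer w w *v partial_cinner (\<alpha> i) \<psi>)))"
      unfolding \<sigma>_def cq_quadratic_form by (simp add: Re_sum)
    also have "\<dots> = (\<Sum>i\<in>UNIV. if i = m then l m else 0)"
      using w(2) by (intro sum.cong) (auto simp: q_def)
    finally show ?thesis by simp
  qed
  ultimately show ?thesis by blast
qed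

lemma fidelity_pure_cq_le_eigenbasis:
  fixes \<psi> :: "complex^('a::finite \<times> 'b::finite)"
  assumes "cinner \<psi> \<psi> = 1" and "onb \<alpha>"
    and ev: "\<forall>i. ptrace_b (outer \<psi> \<psi>) *v \<alpha> i = of_real (l i) *s \<alpha> i"
    and "onb \<beta>" and "\<sigma> \<in> cq_states \<beta>"
  shows "\<exists>\<sigma>'\<in>cq_states \<alpha>. fidelity (outer \<psi> \<psi>) \<sigma> \<le> fidelity (outer \<psi> \<psi>) \<sigma>'"
proof -
  have "Max (range l) \<in> range l" by (intro Max_in) auto
  then obtain m where "l m = Max (range l)" by (metis imageE)
  then have m: "\<forall>i. l i \<le> l m" by simp
  obtain \<sigma>' where "\<sigma>' \<in> cq_states \<alpha>" and "Re (cinner \<psi> (\<sigma>' *v \<psi>)) = l m"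
    using cq_state_expectation_eq_eigenvalue[OF assms(1-3)] by blast
  moreover have "Re (cinner \<psi> (\<sigma> *v \<psi>)) \<le> l m"
    by (rule cq_state_expectation_le_max_eigenvalue[OF assms(2,3) m assms(4,5)])
  moreover have "psd \<sigma>" "psd \<sigma>'"
    using density_cq_state assms(2,4,5) \<open>\<sigma>' \<in> cq_states \<alpha>\<close> by (auto simp: density_def)
  ultimately have "fidelity (outer \<psi> \<psi>) \<sigma> \<le> fidelity (outer \<psi> \<psi>) \<sigma>'"
    by (simp add: fidelity_outer_left)
  with \<open>\<sigma>' \<in> cq_states \<alpha>\<close> show ?thesis by blast
qed

lemma power2_sum_weighted_le:
  fixes l w :: "'a \<Rightarrow> real"
  assumes "\<forall>k. 0 \<le> w k"
  shows "(\<Sum>k\<in>S. l k * w k)\<^sup>2 \<le> (\<Sum>k\<in>S. w k) * (\<Sum>k\<in>S. (l k)\<^sup>2 * w k)"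
proof -
  have "(\<Sum>k\<in>S. l k * w k) = (\<Sum>k\<in>S. sqrt (w k) * (l k * sqrt (w k)))"
    using assms by (intro sum.cong) (auto simp: mult_ac real_sqrt_mult[symmetric])
  then have "(\<Sum>k\<in>S. l k * w k)\<^sup>2 \<le> (\<Sum>k\<in>S. (sqrt (w k))\<^sup>2) * (\<Sum>k\<in>S. (l k * sqrt (w k))\<^sup>2)"
    using Cauchy_Schwarz_ineq_sum by metis
  also have "\<dots> = (\<Sum>k\<in>S. w k) * (\<Sum>k\<in>S. (l k)\<^sup>2 * w k)"
    using assms by (simp add: power_mult_distrib)
  finally show ?thesis .
qed

lemma sum_power2_diagonal_le_eigenvalues:
  assumes oa: "onb \<alpha>" and ob: "onb \<beta>" and ev: "\<forall>k. R *v \<alpha> k = of_real (l k) *s \<alpha> k"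
  shows "(\<Sum>i\<in>UNIV. (Re (cinner (\<beta> i) (R *v \<beta> i)))\<^sup>2) \<le> (\<Sum>k\<in>UNIV. (l k)\<^sup>2)"
proof -
  \<comment> \<open>the weights \<open>w i k\<close> form a doubly stochastic matrix\<close>
  define w where "w i k = (cmod (cinner (\<alpha> k) (\<beta> i)))\<^sup>2" for i k
  have w0: "\<forall>k. 0 \<le> w i k" for i by (simp add: w_def)
  have diag: "Re (cinner (\<beta> i) (R *v \<beta> i)) = (\<Sum>k\<in>UNIV. l k * w i k)" for i
    unfolding w_def by (rule onb_eigen_quadratic_form[OF oa ev])
  have rows: "(\<Sum>k\<in>UNIV. w i k) = 1" for i
    using onb_parseval[OF oa, of "\<beta> i"] onb_cinner_self[OF ob] by (simp add: w_def)
  have cols: "(\<Sum>i\<in>UNIV. w i k) = 1" for k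
    using onb_parseval[OF ob, of "\<alpha> k"] onb_cinner_self[OF oa]
    by (simp add: w_def cinner_commute[of "\<alpha> k"])
  have "(Re (cinner (\<beta> i) (R *v \<beta> i)))\<^sup>2 \<le> (\<Sum>k\<in>UNIV. (l k)\<^sup>2 * w i k)" for i
    using power2_sum_weighted_le[OF w0[of i], of l UNIV] by (simp add: diag rows)
  then have "(\<Sum>i\<in>UNIV. (Re (cinner (\<beta> i) (R *v \<beta> i)))\<^sup>2) \<le> (\<Sum>i\<in>UNIV. \<Sum>k\<in>UNIV. (l k)\<^sup>2 * w i k)"
    by (rule sum_mono)
  also have "\<dots> = (\<Sum>k\<in>UNIV. \<Sum>i\<in>UNIV. (l k)\<^sup>2 * w i k)" by (rule sum.swap)
  also have "\<dots> = (\<Sum>k\<in>UNIV. (l k)\<^sup>2)" by (simp add: cols flip: sum_distrib_left)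
  finally show ?thesis .
qed

lemma affinity_pure_cq_le:
  fixes \<psi> :: "complex^('a::finite \<times> 'b::finite)"
  assumes n: "cinner \<psi> \<psi> = 1" and o: "onb \<alpha>"
    and ev: "\<forall>i. ptrace_b (outer \<psi> \<psi>) *v \<alpha> i = of_real (l i) *s \<alpha> i"
    and ob: "onb \<beta>" and "\<sigma> \<in> cq_states \<beta>"
  shows "affinity (outer \<psi> \<psi>) \<sigma> \<le> sqrt (\<Sum>k\<in>UNIV. (l k)\<^sup>2)"
proof -
  obtain p \<tau> where p: "\<forall>i. 0 \<le> p i" "(\<Sum>i\<in>UNIV. p i) = 1" and t: "\<forall>i. density (\<tau> i)"
    and \<sigma>: "\<sigma> = (\<Sum>i\<in>UNIV. p i *\<^sub>R kron (outer (\<beta> i) (\<beta> i)) (\<tau> i))"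
    using \<open>\<sigma> \<in> cq_states \<beta>\<close> unfolding cq_states_def by blast
  define q where "q i = Re (cinner (\<beta> i) (ptrace_b (outer \<psi> \<psi>) *v \<beta> i))" for i
  have "affinity (outer \<psi> \<psi>) \<sigma>
      = (\<Sum>i\<in>UNIV. sqrt (p i) *
          Re (cinner (partial_cinner (\<beta> i) \<psi>) (msqrt (\<tau> i) *v partial_cinner (\<beta> i) \<psi>)))"
    unfolding affinity_outer_left[OF n] \<sigma> msqrt_cq_state[OF ob p(1) t] cq_quadratic_form
    by (simp add: Re_sum)
  also have "\<dots> \<le> (\<Sum>i\<in>UNIV. sqrt (p i) * q i)"
  proof (intro sum_mono mult_left_mono)
    show "Re (cinner (partial_cinner (\<beta> i) \<psi>) (msqrt (\<tau> i) *v partial_cinner (\<beta> i) \<psi>)) \<le> q i" for i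
      unfolding q_def cinner_ptrace_b_outer using msqrt_density_quadratic_form_le t by blast
  qed (use p in simp)
  also have "\<dots> \<le> sqrt (\<Sum>k\<in>UNIV. (l k)\<^sup>2)"
  proof (rule real_le_rsqrt)
    have "(\<Sum>i\<in>UNIV. sqrt (p i) * q i)\<^sup>2 \<le> (\<Sum>i\<in>UNIV. (sqrt (p i))\<^sup>2) * (\<Sum>i\<in>UNIV. (q i)\<^sup>2)"
      by (rule Cauchy_Schwarz_ineq_sum)
    also have "\<dots> = (\<Sum>i\<in>UNIV. (q i)\<^sup>2)" using p by simp
    also have "\<dots> \<le> (\<Sum>k\<in>UNIV. (l k)\<^sup>2)"
      unfolding q_def by (rule sum_power2_diagonal_le_eigenvalues[OF o ob ev])
    finally show "(\<Sum>i\<in>UNIV. sqrt (p i) * q i)\<^sup>2 \<le> (\<Sum>k\<in>UNIV. (l k)\<^sup>2)" .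
  qed
  finally show ?thesis .
qed

text \<open>The bound is attained by \<open>\<Sum>\<^sub>k (\<lambda>\<^sub>k\<^sup>2 / \<Sum>\<^sub>j \<lambda>\<^sub>j\<^sup>2) |\<alpha>\<^sub>k\<rangle>\<langle>\<alpha>\<^sub>k| \<otimes> |w\<^sub>k\<rangle>\<langle>w\<^sub>k|\<close> with \<open>w\<^sub>k\<close>
  parallel to \<open>(\<langle>\<alpha>\<^sub>k| \<otimes> I)|\<psi>\<rangle>\<close>.\<close>

lemma cq_state_affinity_eq_sqrt_sum_eigenvalues:
  fixes \<psi> :: "complex^('a::finite \<times> 'b::finite)"
  assumes n: "cinner \<psi> \<psi> = 1" and o: "onb \<alpha>"
    and ev: "\<forall>i. ptrace_b (outer \<psi> \<psi>) *v \<alpha> i = of_real (l i) *s \<alpha> i"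
  shows "\<exists>\<sigma>\<in>cq_states \<alpha>. affinity (outer \<psi> \<psi>) \<sigma> = sqrt (\<Sum>k\<in>UNIV. (l k)\<^sup>2)"
proof -
  note l = ptrace_b_outer_eigenvalues[OF assms]
  have l0: "0 \<le> l k" for k using l(1) cinner_self_nonneg by metis
  define S where "S = (\<Sum>k\<in>UNIV. (l k)\<^sup>2)"
  have "S \<noteq> 0"
  proof
    assume "S = 0"
    then have "\<forall>k. l k = 0" unfolding S_def by (subst (asm) sum_nonneg_eq_0_iff) auto
    then show False using l(2) by simp
  qed
  then have "S > 0" unfolding S_def by (simp add: order_le_neq_trans sum_nonneg)
  have "\<forall>k. \<exists>w. cinner w w = 1 \<and>
      Re (cinner (partial_cinner (\<alpha> k) \<psi>) (outer w w *v partial_cinner (\<alpha> k) \<psi>)) = l k"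
    unfolding l(1) using exists_unit_vector_aligned by blast
  from choice[OF this] obtain w where w: "\<forall>k. cinner (w k) (w k) = 1 \<and>
      Re (cinner (partial_cinner (\<alpha> k) \<psi>) (outer (w k) (w k) *v partial_cinner (\<alpha> k) \<psi>)) = l k"
    by blast
  then have w1: "\<And>k. cinner (w k) (w k) = 1"
    and w2: "\<And>k. Re (cinner (partial_cinner (\<alpha> k) \<psi>) (outer (w k) (w k) *v partial_cinner (\<alpha> k) \<psi>)) = l k"
    by blast+
  define p where "p k = (l k)\<^sup>2 / S" for k
  define \<sigma> where "\<sigma> = (\<Sum>k\<in>UNIV. p k *\<^sub>R kron (outer (\<alpha> k) (\<alpha> k)) (outer (w k) (w k)))"
  have p0: "\<forall>k. 0 \<le> p k" using \<open>S > 0\<close> by (simp add: p_def)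
  have "(\<Sum>k\<in>UNIV. p k) = 1" using \<open>S > 0\<close> by (simp add: p_def S_def flip: sum_divide_distrib)
  moreover have wd: "\<forall>k. density (outer (w k) (w k))" using w1 by (simp add: density_outer)
  ultimately have "\<sigma> \<in> cq_states \<alpha>"
    unfolding cq_states_def \<sigma>_def
    by (intro CollectI exI[of _ p] exI[of _ "\<lambda>k. outer (w k) (w k)"]) (use p0 in simp)
  have "affinity (outer \<psi> \<psi>) \<sigma> = (\<Sum>k\<in>UNIV. sqrt (p k) * l k)"
    unfolding affinity_outer_left[OF n] \<sigma>_def msqrt_cq_state[OF o p0 wd] cq_quadratic_form
    by (simp add: Re_sum msqrt_outer_unit w1 w2)
  also have "\<dots> = (\<Sum>k\<in>UNIV. (l k)\<^sup>2 / sqrt S)"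
    using l0 \<open>S > 0\<close> by (intro sum.cong) (simp_all add: p_def real_sqrt_divide power2_eq_square)
  also have "\<dots> = sqrt S"
    using \<open>S > 0\<close> by (simp add: S_def real_div_sqrt flip: sum_divide_distrib)
  finally show ?thesis using \<open>\<sigma> \<in> cq_states \<alpha>\<close> unfolding S_def by blast
qed

lemma affinity_pure_cq_le_eigenbasis:
  fixes \<psi> :: "complex^('a::finite \<times> 'b::finite)"
  assumes "cinner \<psi> \<psi> = 1" and "onb \<alpha>"
    and "\<forall>i. ptrace_b (outer \<psi> \<psi>) *v \<alpha> i = of_real (l i) *s \<alpha> i"
    and "onb \<beta>" and "\<sigma> \<in> cq_states \<beta>"
  shows "\<exists>\<sigma>'\<in>cq_states \<alpha>. affinity (outer \<psi> \<psi>) \<sigma> \<le> affinity (outer \<psi> \<psi>) \<sigma>'"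
  using affinity_pure_cq_le[OF assms] cq_state_affinity_eq_sqrt_sum_eigenvalues[OF assms(1-3)]
  by (metis order.refl)

section \<open>Correlated coherence versus discord\<close>

lemma INF_UNION_le_INF_INF:
  fixes f :: "'s \<Rightarrow> real"
  assumes bdd: "bdd_below (f ` (\<Union>\<alpha>\<in>B. S \<alpha>))" and "E \<subseteq> B" "E \<noteq> {}"
    and ne: "\<And>\<alpha>. \<alpha> \<in> B \<Longrightarrow> S \<alpha> \<noteq> {}"
  shows "(INF \<sigma>\<in>(\<Union>\<alpha>\<in>B. S \<alpha>). f \<sigma>) \<le> (INF \<alpha>\<in>E. INF \<sigma>\<in>S \<alpha>. f \<sigma>)"
proof (rule cINF_greatest[OF \<open>E \<noteq> {}\<close>])
  fix \<alpha> assume "\<alpha> \<in> E"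
  with \<open>E \<subseteq> B\<close> show "(INF \<sigma>\<in>(\<Union>\<alpha>\<in>B. S \<alpha>). f \<sigma>) \<le> (INF \<sigma>\<in>S \<alpha>. f \<sigma>)"
    using ne by (intro cINF_greatest cINF_lower[OF bdd]) auto
qed

lemma INF_INF_le_INF_UNION_if_dominated:
  fixes f :: "'s \<Rightarrow> real"
  assumes bdd: "bdd_below (f ` (\<Union>\<alpha>\<in>B. S \<alpha>))" and "\<alpha>\<^sub>0 \<in> E" "E \<subseteq> B"
    and ne: "\<And>\<alpha>. \<alpha> \<in> B \<Longrightarrow> S \<alpha> \<noteq> {}"
    and dominated: "\<And>\<sigma>. \<sigma> \<in> (\<Union>\<alpha>\<in>B. S \<alpha>) \<Longrightarrow> \<exists>\<sigma>'\<in>S \<alpha>\<^sub>0. f \<sigma>' \<le> f \<sigma>"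
  shows "(INF \<alpha>\<in>E. INF \<sigma>\<in>S \<alpha>. f \<sigma>) \<le> (INF \<sigma>\<in>(\<Union>\<alpha>\<in>B. S \<alpha>). f \<sigma>)"
proof (rule cINF_greatest)
  show "(\<Union>\<alpha>\<in>B. S \<alpha>) \<noteq> {}" using assms(2,3) ne by blast
  obtain m where m: "\<And>\<sigma>. \<sigma> \<in> (\<Union>\<alpha>\<in>B. S \<alpha>) \<Longrightarrow> m \<le> f \<sigma>"
    using bdd unfolding bdd_below_def by auto
  have bdd_E: "bdd_below ((\<lambda>\<alpha>. INF \<sigma>\<in>S \<alpha>. f \<sigma>) ` E)"
    using \<open>E \<subseteq> B\<close> ne m by (intro bdd_belowI[of _ m]) (auto intro!: cINF_greatest)
  have bdd_0: "bdd_below (f ` S \<alpha>\<^sub>0)"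
    by (rule bdd_below_mono[OF bdd]) (use assms(2,3) in blast)
  fix \<sigma> assume "\<sigma> \<in> (\<Union>\<alpha>\<in>B. S \<alpha>)"
  then obtain \<sigma>' where "\<sigma>' \<in> S \<alpha>\<^sub>0" "f \<sigma>' \<le> f \<sigma>" using dominated by blast
  have "(INF \<alpha>\<in>E. INF \<sigma>\<in>S \<alpha>. f \<sigma>) \<le> (INF \<sigma>\<in>S \<alpha>\<^sub>0. f \<sigma>)"
    by (rule cINF_lower[OF bdd_E \<open>\<alpha>\<^sub>0 \<in> E\<close>])
  also have "\<dots> \<le> f \<sigma>'" by (rule cINF_lower[OF bdd_0 \<open>\<sigma>' \<in> S \<alpha>\<^sub>0\<close>])
  also have "\<dots> \<le> f \<sigma>" by fact
  finally show "(INF \<alpha>\<in>E. INF \<sigma>\<in>S \<alpha>. f \<sigma>) \<le> f \<sigma>" .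
qed

lemma dX_lower_bound:
  fixes \<rho> \<sigma> :: "'n::finite cmat"
  assumes "X = fidelity \<or> X = affinity" and "density \<rho>" "density \<sigma>"
  shows "1 - (real CARD('n))\<^sup>2 \<le> dX X \<rho> \<sigma>"
proof -
  have "0 \<le> X \<rho> \<sigma> \<and> X \<rho> \<sigma> \<le> real CARD('n)"
    using assms fidelity_bounds affinity_bounds by blast
  then show ?thesis unfolding dX_def by (simp add: power_mono)
qed

lemma dX_pure_cq_ge_eigenbasis:
  fixes \<psi> :: "complex^('a::finite \<times> 'b::finite)"
  assumes "X = fidelity \<or> X = affinity" and "cinner \<psi> \<psi> = 1" and "onb \<alpha>"
    and "\<forall>i. ptrace_b (outer \<psi> \<psi>) *v \<alpha> i = of_real (l i) *s \<alpha> i"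
    and "onb \<beta>" and "\<sigma> \<in> cq_states \<beta>"
  shows "\<exists>\<sigma>'\<in>cq_states \<alpha>. dX X (outer \<psi> \<psi>) \<sigma>' \<le> dX X (outer \<psi> \<psi>) \<sigma>"
proof -
  obtain \<sigma>' where "\<sigma>' \<in> cq_states \<alpha>" and le: "X (outer \<psi> \<psi>) \<sigma> \<le> X (outer \<psi> \<psi>) \<sigma>'"
    using assms fidelity_pure_cq_le_eigenbasis affinity_pure_cq_le_eigenbasis by blast
  have "0 \<le> X (outer \<psi> \<psi>) \<sigma>"
    using assms(1) fidelity_bounds affinity_bounds density_outer[OF assms(2)]
      density_cq_state[OF assms(5,6)] by blast
  with le have "dX X (outer \<psi> \<psi>) \<sigma>' \<le> dX X (outer \<psi> \<psi>) \<sigma>"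
    unfolding dX_def by (simp add: power_mono)
  with \<open>\<sigma>' \<in> cq_states \<alpha>\<close> show ?thesis by blast
qed

lemma eigen_onb_scaleR_mat_1: "eigen_onb (r *\<^sub>R mat 1) \<alpha> \<longleftrightarrow> onb \<alpha>"
  by (auto simp: eigen_onb_def matrix_vector_mult_scaleR_left vec_eq_iff)

lemma bdd_below_dX_cq_states:
  assumes "X = fidelity \<or> X = affinity" and "density \<rho>"
  shows "bdd_below (dX X \<rho> ` (\<Union>\<alpha>\<in>{\<alpha>. onb \<alpha>}. cq_states \<alpha>))"
  using dX_lower_bound[OF assms] density_cq_state by (intro bdd_belowI) blast

lemma ptrace_b_eigenbasis_exists:
  assumes "density \<rho>"
  obtains \<alpha> l where "onb \<alpha>" "\<forall>i. ptrace_b \<rho> *v \<alpha> i = of_real (l i) *s \<alpha> i"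
proof -
  have "adjoint (ptrace_b \<rho>) = ptrace_b \<rho>"
    using assms by (simp add: adjoint_ptrace_b density_def psd_def)
  then show ?thesis using hermitian_spectral that by blast
qed

lemma eigen_onb_if_eigen_expansion:
  "onb \<alpha> \<Longrightarrow> \<forall>i. A *v \<alpha> i = of_real (l i) *s \<alpha> i \<Longrightarrow> eigen_onb A \<alpha>"
  by (auto simp: eigen_onb_def vector_scalar_mult_def)

lemma D_disc_le_C_cc:
  assumes "X = fidelity \<or> X = affinity" and "density \<rho>"
  shows "D_disc X \<rho> \<le> C_cc X \<rho>"
proof -
  obtain \<alpha> l where "onb \<alpha>" "\<forall>i. ptrace_b \<rho> *v \<alpha> i = of_real (l i) *s \<alpha> i"
    using ptrace_b_eigenbasis_exists[OF assms(2)] .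
  then have "eigen_onb (ptrace_b \<rho>) \<alpha>" by (rule eigen_onb_if_eigen_expansion)
  then show ?thesis
    unfolding C_cc_def C_basis_def D_disc_def
    using bdd_below_dX_cq_states[OF assms] cq_states_nonempty
    by (intro INF_UNION_le_INF_INF) (auto simp: eigen_onb_def)
qed

lemma C_cc_eq_D_disc_if_maximally_mixed:
  assumes "X = fidelity \<or> X = affinity" and "density \<rho>"
    and "ptrace_b \<rho> = (1 / real CARD('a)) *\<^sub>R mat 1"
  shows "C_cc X \<rho> = D_disc X (\<rho> :: ('a::finite \<times> 'b::finite) cmat)"
proof -
  obtain \<alpha> l where "onb \<alpha>" "\<forall>i. ptrace_b \<rho> *v \<alpha> i = of_real (l i) *s \<alpha> i"
    using ptrace_b_eigenbasis_exists[OF assms(2)] .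
  then show ?thesis
    unfolding C_cc_def C_basis_def D_disc_def assms(3) eigen_onb_scaleR_mat_1
    using bdd_below_dX_cq_states[OF assms(1,2)] cq_states_nonempty
    by (intro cINF_UNION[symmetric]) (auto simp: image_UN)
qed

lemma C_cc_le_D_disc_if_pure:
  assumes "X = fidelity \<or> X = affinity" and "density \<rho>" and "pure_state \<rho>"
  shows "C_cc X \<rho> \<le> D_disc X \<rho>"
proof -
  obtain \<psi> where "cinner \<psi> \<psi> = 1" and \<rho>: "\<rho> = outer \<psi> \<psi>"
    using assms(3) by (auto simp: pure_state_def)
  obtain \<alpha> l where "onb \<alpha>" and ev: "\<forall>i. ptrace_b \<rho> *v \<alpha> i = of_real (l i) *s \<alpha> i"
    using ptrace_b_eigenbasis_exists[OF assms(2)] .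
  then have "eigen_onb (ptrace_b \<rho>) \<alpha>" by (rule eigen_onb_if_eigen_expansion)
  then show ?thesis
    unfolding C_cc_def C_basis_def D_disc_def
    using bdd_below_dX_cq_states[OF assms(1,2)] cq_states_nonempty
      dX_pure_cq_ge_eigenbasis[OF assms(1) \<open>cinner \<psi> \<psi> = 1\<close> \<open>onb \<alpha>\<close> ev[unfolded \<rho>]]
    by (intro INF_INF_le_INF_UNION_if_dominated[where \<alpha>\<^sub>0 = \<alpha>]) (auto simp: \<rho> eigen_onb_def)
qed

theorem theorem9:
  fixes \<rho> :: "('a::finite \<times> 'b::finite) cmat"
    and X :: "('a \<times> 'b) cmat \<Rightarrow> ('a \<times> 'b) cmat \<Rightarrow> real"
  assumes "X = fidelity \<or> X = affinity"
    and "density \<rho>"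
  shows "C_cc X \<rho> \<ge> D_disc X \<rho> \<and>
         ((ptrace_b \<rho> = (1 / real CARD('a)) *\<^sub>R mat 1 \<or> pure_state \<rho>) \<longrightarrow> C_cc X \<rho> = D_disc X \<rho>)"
  using D_disc_le_C_cc[OF assms] C_cc_eq_D_disc_if_maximally_mixed[OF assms]
    C_cc_le_D_disc_if_pure[OF assms]
  by fastforce

end
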